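(* Let $d\sigma^2$ be a Kossowski metric on a $2$-manifold $M^2$ and $p$ an $A_2$-point. For a strongly adapted coordinate system $(u,v)$ at $p$ with $d\sigma^2=E\,du^2+2F\,du\,dv+G\,dv^2$ and with $\lambda$ (satisfying $EG-F^2=\lambda^2$) chosen so that $\lambda_v>0$, define at singular points $(u,0)$ $$\kappa_s(u):=\frac{-F_vE_u+2EF_{uv}-EE_{vv}}{2E^{3/2}\lambda_v}.$$ Then the value of $\kappa_s$ does not depend on the choice of strongly adapted coordinate system satisfying $\lambda_v>0$. In particular, it does not depend on the orientation of the singular curve.
   Context: For a smooth positive semi-definite metric $d\sigma^2$ with $\langle\cdot,\cdot\rangle=d\sigma^2$: singular points are where it is not positive definite; $\mathcal{N}_p=\{v: d\sigma^2(v,w)=0\ \forall w\}$ is the null space; the Kossowski pseudo-connection is $\Gamma(X,Y,Z)=\tfrac12\bigl(X\langle Y,Z\rangle+Y\langle X,Z\rangle-Z\langle X,Y\rangle+\langle[X,Y],Z\rangle-\langle[X,Z],Y\rangle-\langle[Y,Z],X\rangle\bigr)$; the metric is admissible if at each singular point $p$, $\Gamma(V_1,V_2,V_3)(p)=0$ whenever $V_3(p)\in\mathcal{N}_p$. An admissible metric is frontal if in each local coordinate system there is a smooth $\lambda$ with $EG-F^2=\lambda^2$; a singular point is non-degenerate if $d\lambda\neq0$ there; a Kossowski metric is a frontal metric all of whose singular points are non-degenerate. Near a non-degenerate singular point $p$ the singular set is a regular curve $\gamma(t)$ with $\gamma(0)=p$, and there is a smooth nonvanishing vector field $\eta(t)\in\mathcal{N}_{\gamma(t)}$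 along it; $p$ is an $A_2$-point if $\eta(0)$ and $\dot\gamma(0)$ are linearly independent. A local coordinate system $(u,v)$ near an $A_2$-point is strongly adapted if the singular set in its domain is the $u$-axis and $\partial_v\in\mathcal{N}_{(u,0)}$ at every singular point $(u,0)$. *)

theory Defs
  imports "HOL-Analysis.Analysis"
begin

text \<open>Local model: the surface is an open set U of the plane (points of type real \<times> real),
  the metric is given by smooth coefficient functions E0, F0, G0 on U.\<close>

type_synonym pt = "real \<times> real"

definition Du :: "(pt \<Rightarrow> real) \<Rightarrow> pt \<Rightarrow> real" where
  "Du f x = deriv (\<lambda>t. f (t, snd x)) (fst x)"

definition Dv :: "(pt \<Rightarrow> real) \<Rightarrow> pt \<Rightarrow> real" where
  "Dv f x = deriv (\<lambda>t. f (fst x, t)) (snd x)"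

definition DuV :: "(pt \<Rightarrow> pt) \<Rightarrow> pt \<Rightarrow> pt" where
  "DuV phi x = (Du (\<lambda>y. fst (phi y)) x, Du (\<lambda>y. snd (phi y)) x)"

definition DvV :: "(pt \<Rightarrow> pt) \<Rightarrow> pt \<Rightarrow> pt" where
  "DvV phi x = (Dv (\<lambda>y. fst (phi y)) x, Dv (\<lambda>y. snd (phi y)) x)"

fun pderivs :: "bool list \<Rightarrow> (pt \<Rightarrow> real) \<Rightarrow> pt \<Rightarrow> real" where
  "pderivs [] f = f"
| "pderivs (b # bs) f = (if b then Du (pderivs bs f) else Dv (pderivs bs f))"

definition smooth2_on :: "pt set \<Rightarrow> (pt \<Rightarrow> real) \<Rightarrow> bool" where
  "smooth2_on S f \<longleftrightarrow> (\<forall>bs. \<forall>x\<in>S. pderivs bs f differentiable (at x))"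

definition smoothV_on :: "pt set \<Rightarrow> (pt \<Rightarrow> pt) \<Rightarrow> bool" where
  "smoothV_on S phi \<longleftrightarrow> smooth2_on S (\<lambda>y. fst (phi y)) \<and> smooth2_on S (\<lambda>y. snd (phi y))"

definition smooth1_on :: "real set \<Rightarrow> (real \<Rightarrow> real) \<Rightarrow> bool" where
  "smooth1_on I g \<longleftrightarrow> (\<forall>n. \<forall>t\<in>I. ((deriv ^^ n) g) field_differentiable (at t))"

definition smoothC_on :: "real set \<Rightarrow> (real \<Rightarrow> pt) \<Rightarrow> bool" where
  "smoothC_on I c \<longleftrightarrow> smooth1_on I (\<lambda>t. fst (c t)) \<and> smooth1_on I (\<lambda>t. snd (c t))"

definition dC :: "(real \<Rightarrow> pt) \<Rightarrow> real \<Rightarrow> pt" where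
  "dC c t = (deriv (\<lambda>s. fst (c s)) t, deriv (\<lambda>s. snd (c s)) t)"

definition ip :: "(pt \<Rightarrow> real) \<Rightarrow> (pt \<Rightarrow> real) \<Rightarrow> (pt \<Rightarrow> real) \<Rightarrow> pt \<Rightarrow> pt \<Rightarrow> pt \<Rightarrow> real" where
  "ip E0 F0 G0 x a b = E0 x * fst a * fst b + F0 x * (fst a * snd b + snd a * fst b) + G0 x * snd a * snd b"

definition psd_metric :: "pt set \<Rightarrow> (pt \<Rightarrow> real) \<Rightarrow> (pt \<Rightarrow> real) \<Rightarrow> (pt \<Rightarrow> real) \<Rightarrow> bool" where
  "psd_metric U E0 F0 G0 \<longleftrightarrow> open U \<and> smooth2_on U E0 \<and> smooth2_on U F0 \<and> smooth2_on U G0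
     \<and> (\<forall>x\<in>U. \<forall>a. ip E0 F0 G0 x a a \<ge> 0)"

definition singular_pt :: "pt set \<Rightarrow> (pt \<Rightarrow> real) \<Rightarrow> (pt \<Rightarrow> real) \<Rightarrow> (pt \<Rightarrow> real) \<Rightarrow> pt \<Rightarrow> bool" where
  "singular_pt U E0 F0 G0 x \<longleftrightarrow> x \<in> U \<and> \<not> (\<forall>a. a \<noteq> 0 \<longrightarrow> ip E0 F0 G0 x a a > 0)"

definition null_space :: "(pt \<Rightarrow> real) \<Rightarrow> (pt \<Rightarrow> real) \<Rightarrow> (pt \<Rightarrow> real) \<Rightarrow> pt \<Rightarrow> pt set" where
  "null_space E0 F0 G0 x = {a. \<forall>b. ip E0 F0 G0 x a b = 0}"

definition vf_app :: "(pt \<Rightarrow> pt) \<Rightarrow> (pt \<Rightarrow> real) \<Rightarrow> pt \<Rightarrow> real" where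
  "vf_app X f x = fst (X x) * Du f x + snd (X x) * Dv f x"

definition lie :: "(pt \<Rightarrow> pt) \<Rightarrow> (pt \<Rightarrow> pt) \<Rightarrow> pt \<Rightarrow> pt" where
  "lie X Y x = (vf_app X (\<lambda>y. fst (Y y)) x - vf_app Y (\<lambda>y. fst (X y)) x,
                vf_app X (\<lambda>y. snd (Y y)) x - vf_app Y (\<lambda>y. snd (X y)) x)"

definition ipf :: "(pt \<Rightarrow> real) \<Rightarrow> (pt \<Rightarrow> real) \<Rightarrow> (pt \<Rightarrow> real) \<Rightarrow> (pt \<Rightarrow> pt) \<Rightarrow> (pt \<Rightarrow> pt) \<Rightarrow> pt \<Rightarrow> real" where
  "ipf E0 F0 G0 X Y x = ip E0 F0 G0 x (X x) (Y x)"

definition kossowski_Gamma ::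
  "(pt \<Rightarrow> real) \<Rightarrow> (pt \<Rightarrow> real) \<Rightarrow> (pt \<Rightarrow> real) \<Rightarrow> (pt \<Rightarrow> pt) \<Rightarrow> (pt \<Rightarrow> pt) \<Rightarrow> (pt \<Rightarrow> pt) \<Rightarrow> pt \<Rightarrow> real" where
  "kossowski_Gamma E0 F0 G0 X Y Z x = (1/2) *
     ( vf_app X (ipf E0 F0 G0 Y Z) x + vf_app Y (ipf E0 F0 G0 X Z) x - vf_app Z (ipf E0 F0 G0 X Y) x
     + ip E0 F0 G0 x (lie X Y x) (Z x) - ip E0 F0 G0 x (lie X Z x) (Y x) - ip E0 F0 G0 x (lie Y Z x) (X x))"

definition admissible :: "pt set \<Rightarrow> (pt \<Rightarrow> real) \<Rightarrow> (pt \<Rightarrow> real) \<Rightarrow> (pt \<Rightarrow> real) \<Rightarrow> bool" where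
  "admissible U E0 F0 G0 \<longleftrightarrow> psd_metric U E0 F0 G0 \<and>
     (\<forall>p. singular_pt U E0 F0 G0 p \<longrightarrow>
        (\<forall>V1 V2 V3. smoothV_on U V1 \<and> smoothV_on U V2 \<and> smoothV_on U V3 \<and>
            V3 p \<in> null_space E0 F0 G0 p \<longrightarrow> kossowski_Gamma E0 F0 G0 V1 V2 V3 p = 0))"

text \<open>Frontal with all singular points non-degenerate (the whole of U is one chart).\<close>
definition kossowski_metric :: "pt set \<Rightarrow> (pt \<Rightarrow> real) \<Rightarrow> (pt \<Rightarrow> real) \<Rightarrow> (pt \<Rightarrow> real) \<Rightarrow> bool" where
  "kossowski_metric U E0 F0 G0 \<longleftrightarrow> admissible U E0 F0 G0 \<and>
     (\<exists>lam. smooth2_on U lam \<and> (\<forall>x\<in>U. E0 x * G0 x - (F0 x)\<^sup>2 = (lam x)\<^sup>2) \<and>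
        (\<forall>p. singular_pt U E0 F0 G0 p \<longrightarrow> (Du lam p, Dv lam p) \<noteq> (0, 0)))"

definition A2_point :: "pt set \<Rightarrow> (pt \<Rightarrow> real) \<Rightarrow> (pt \<Rightarrow> real) \<Rightarrow> (pt \<Rightarrow> real) \<Rightarrow> pt \<Rightarrow> bool" where
  "A2_point U E0 F0 G0 p \<longleftrightarrow> singular_pt U E0 F0 G0 p \<and>
     (\<exists>W eps gam eta. open W \<and> p \<in> W \<and> W \<subseteq> U \<and> eps > 0 \<and>
        smoothC_on {-eps<..<eps} gam \<and> gam 0 = p \<and>
        (\<forall>t\<in>{-eps<..<eps}. dC gam t \<noteq> 0) \<and>
        gam ` {-eps<..<eps} = {q\<in>W. singular_pt U E0 F0 G0 q} \<and>
        smoothC_on {-eps<..<eps} eta \<and>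
        (\<forall>t\<in>{-eps<..<eps}. eta t \<noteq> 0 \<and> eta t \<in> null_space E0 F0 G0 (gam t)) \<and>
        (\<forall>s t. s *\<^sub>R eta 0 + t *\<^sub>R dC gam 0 = 0 \<longrightarrow> s = 0 \<and> t = 0))"

definition coord_system :: "pt set \<Rightarrow> pt set \<Rightarrow> (pt \<Rightarrow> pt) \<Rightarrow> bool" where
  "coord_system U V phi \<longleftrightarrow> open V \<and> phi ` V \<subseteq> U \<and> open (phi ` V) \<and> inj_on phi V \<and>
     smoothV_on V phi \<and> (\<exists>psi. (\<forall>x\<in>V. psi (phi x) = x) \<and> smoothV_on (phi ` V) psi)"

definition cE :: "(pt \<Rightarrow> real) \<Rightarrow> (pt \<Rightarrow> real) \<Rightarrow> (pt \<Rightarrow> real) \<Rightarrow> (pt \<Rightarrow> pt) \<Rightarrow> pt \<Rightarrow> real" where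
  "cE E0 F0 G0 phi x = ip E0 F0 G0 (phi x) (DuV phi x) (DuV phi x)"
definition cF :: "(pt \<Rightarrow> real) \<Rightarrow> (pt \<Rightarrow> real) \<Rightarrow> (pt \<Rightarrow> real) \<Rightarrow> (pt \<Rightarrow> pt) \<Rightarrow> pt \<Rightarrow> real" where
  "cF E0 F0 G0 phi x = ip E0 F0 G0 (phi x) (DuV phi x) (DvV phi x)"
definition cG :: "(pt \<Rightarrow> real) \<Rightarrow> (pt \<Rightarrow> real) \<Rightarrow> (pt \<Rightarrow> real) \<Rightarrow> (pt \<Rightarrow> pt) \<Rightarrow> pt \<Rightarrow> real" where
  "cG E0 F0 G0 phi x = ip E0 F0 G0 (phi x) (DvV phi x) (DvV phi x)"

definition strongly_adapted :: "pt set \<Rightarrow> (pt \<Rightarrow> real) \<Rightarrow> (pt \<Rightarrow> real) \<Rightarrow> (pt \<Rightarrow> real) \<Rightarrow> pt \<Rightarrow> pt set \<Rightarrow> (pt \<Rightarrow> pt) \<Rightarrow> bool" where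
  "strongly_adapted U E0 F0 G0 p V phi \<longleftrightarrow> coord_system U V phi \<and> p \<in> phi ` V \<and>
     (\<forall>q\<in>V. singular_pt U E0 F0 G0 (phi q) \<longleftrightarrow> snd q = 0) \<and>
     (\<forall>q\<in>V. snd q = 0 \<longrightarrow> DvV phi q \<in> null_space E0 F0 G0 (phi q))"

definition good_lambda :: "(pt \<Rightarrow> real) \<Rightarrow> (pt \<Rightarrow> real) \<Rightarrow> (pt \<Rightarrow> real) \<Rightarrow> pt set \<Rightarrow> (pt \<Rightarrow> pt) \<Rightarrow> (pt \<Rightarrow> real) \<Rightarrow> bool" where
  "good_lambda E0 F0 G0 V phi lam \<longleftrightarrow> smooth2_on V lam \<and>
     (\<forall>q\<in>V. cE E0 F0 G0 phi q * cG E0 F0 G0 phi q - (cF E0 F0 G0 phi q)\<^sup>2 = (lam q)\<^sup>2) \<and>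
     (\<forall>q\<in>V. snd q = 0 \<longrightarrow> Dv lam q > 0)"

definition kappa_s :: "(pt \<Rightarrow> real) \<Rightarrow> (pt \<Rightarrow> real) \<Rightarrow> (pt \<Rightarrow> real) \<Rightarrow> (pt \<Rightarrow> pt) \<Rightarrow> (pt \<Rightarrow> real) \<Rightarrow> real \<Rightarrow> real" where
  "kappa_s E0 F0 G0 phi lam u =
     (let E = cE E0 F0 G0 phi; F = cF E0 F0 G0 phi; x = (u, 0) in
       (- Dv F x * Du E x + 2 * E x * Du (Dv F) x - E x * Dv (Dv E) x)
       / (2 * E x powr (3/2) * Dv lam x))"

end

theory Submission
  imports Defs
begin

text \<open>In a strongly adapted chart \<open>F\<close> and \<open>G\<close> vanish on the \<open>u\<close>-axis; since \<open>G \<ge> 0\<close> also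
  \<open>G\<^sub>v = 0\<close> there, and admissibility gives \<open>E\<^sub>v = 0\<close>. Differentiating \<open>EG - F\<^sup>2 = \<lambda>\<^sup>2\<close> twice yields
  \<open>2 \<lambda>\<^sub>v\<^sup>2 = E G\<^sub>v\<^sub>v - 2 F\<^sub>v\<^sup>2\<close> on the axis, so \<open>E > 0\<close> and \<open>\<lambda>\<^sub>v\<close> is determined by the metric.
  Two strongly adapted charts differ by a transition \<open>(a, b)\<close> with \<open>b = 0\<close> and \<open>a\<^sub>v = 0\<close> on the
  axis, both \<open>\<partial>\<^sub>v\<close> being null. Expanding the transformation rules of \<open>E, F, G\<close> to second order at
  the base point, \<open>E\<close> acquires the factor \<open>a\<^sub>u\<^sup>2\<close>, the numerator of \<open>\<kappa>\<^sub>s\<close> the factor \<open>a\<^sub>u\<^sup>4 b\<^sub>v\<^sup>2\<close>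
  and \<open>\<lambda>\<^sub>v\<close> the factor \<open>|a\<^sub>u| b\<^sub>v\<^sup>2\<close>; these cancel in \<open>\<kappa>\<^sub>s\<close>.\<close>

lemma has_derivative_partials:
  assumes "f differentiable (at z)"
  shows "(f has_derivative (\<lambda>h. Du f z * fst h + Dv f z * snd h)) (at z)"
proof -
  obtain D where D: "(f has_derivative D) (at z)" using assms unfolding differentiable_def by blast
  have lin: "linear D" using D has_derivative_linear by blast
  have scale: "(\<lambda>h. D (h *\<^sub>R e)) = (*) (D e)" for e
  proof
    fix h :: real
    show "D (h *\<^sub>R e) = D e * h" using linear_scale[OF lin] by simp
  qed
  have "((\<lambda>t. (t, snd z)) has_derivative (\<lambda>h. (h, 0))) (at (fst z))"
    by (intro has_derivative_Pair has_derivative_ident has_derivative_const)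
  from has_derivative_compose[OF this, of f D]
  have "((\<lambda>t. f (t, snd z)) has_derivative (\<lambda>h. D (h *\<^sub>R (1, 0)))) (at (fst z))"
    using D by simp
  hence "((\<lambda>t. f (t, snd z)) has_real_derivative D (1, 0)) (at (fst z))"
    unfolding has_field_derivative_def scale .
  hence u: "Du f z = D (1, 0)" unfolding Du_def by (rule DERIV_imp_deriv)
  have "((\<lambda>t. (fst z, t)) has_derivative (\<lambda>h. (0, h))) (at (snd z))"
    by (intro has_derivative_Pair has_derivative_ident has_derivative_const)
  from has_derivative_compose[OF this, of f D]
  have "((\<lambda>t. f (fst z, t)) has_derivative (\<lambda>h. D (h *\<^sub>R (0, 1)))) (at (snd z))"
    using D by simp
  hence "((\<lambda>t. f (fst z, t)) has_real_derivative D (0, 1)) (at (snd z))"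
    unfolding has_field_derivative_def scale .
  hence v: "Dv f z = D (0, 1)" unfolding Dv_def by (rule DERIV_imp_deriv)
  have "D = (\<lambda>h. Du f z * fst h + Dv f z * snd h)"
  proof
    fix h :: pt
    have "h = fst h *\<^sub>R (1, 0) + snd h *\<^sub>R (0, 1)" by (cases h) auto
    hence "D h = D (fst h *\<^sub>R (1, 0)) + D (snd h *\<^sub>R (0, 1))"
      using linear_add[OF lin] by metis
    also have "\<dots> = fst h * D (1, 0) + snd h * D (0, 1)"
      by (simp only: linear_scale[OF lin] real_scaleR_def)
    finally show "D h = Du f z * fst h + Dv f z * snd h" by (simp add: u v mult.commute)
  qed
  thus ?thesis using D by simp
qed

lemma DERIV_comp_Pair:
  assumes "g differentiable (at (\<alpha> t, \<beta> t))"
    and "(\<alpha> has_real_derivative a') (at t)" and "(\<beta> has_real_derivative b') (at t)"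
  shows "((\<lambda>t. g (\<alpha> t, \<beta> t)) has_real_derivative
           (Du g (\<alpha> t, \<beta> t) * a' + Dv g (\<alpha> t, \<beta> t) * b')) (at t)"
proof -
  have "((\<lambda>t. (\<alpha> t, \<beta> t)) has_derivative (\<lambda>h. (a' * h, b' * h))) (at t)"
    using assms(2,3) unfolding has_field_derivative_def by (rule has_derivative_Pair)
  from has_derivative_compose[OF this has_derivative_partials[OF assms(1)]]
  have "((\<lambda>t. g (\<alpha> t, \<beta> t)) has_derivative
     (\<lambda>h. Du g (\<alpha> t, \<beta> t) * (a' * h) + Dv g (\<alpha> t, \<beta> t) * (b' * h))) (at t)"
    by simp
  moreover have "(\<lambda>h. Du g (\<alpha> t, \<beta> t) * (a' * h) + Dv g (\<alpha> t, \<beta> t) * (b' * h))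
     = (*) (Du g (\<alpha> t, \<beta> t) * a' + Dv g (\<alpha> t, \<beta> t) * b')"
    by (rule ext) (simp add: algebra_simps)
  ultimately show ?thesis unfolding has_field_derivative_def by simp
qed

lemma DERIV_Du:
  assumes "f differentiable (at (x, y))"
  shows "((\<lambda>t. f (t, y)) has_real_derivative Du f (x, y)) (at x)"
  using DERIV_comp_Pair[where g=f and \<alpha>="\<lambda>t. t" and \<beta>="\<lambda>t. y" and t=x and a'=1 and b'=0,
     OF _ DERIV_ident DERIV_const] assms by simp

lemma DERIV_Dv:
  assumes "f differentiable (at (x, y))"
  shows "((\<lambda>t. f (x, t)) has_real_derivative Dv f (x, y)) (at y)"
  using DERIV_comp_Pair[where g=f and \<alpha>="\<lambda>t. x" and \<beta>="\<lambda>t. t" and t=y and a'=0 and b'=1,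
     OF _ DERIV_const DERIV_ident] assms by simp

lemma DERIV_Du_at:
  "f differentiable (at x) \<Longrightarrow> ((\<lambda>t. f (t, snd x)) has_real_derivative Du f x) (at (fst x))"
  using DERIV_Du[of f "fst x" "snd x"] by simp

lemma DERIV_Dv_at:
  "f differentiable (at x) \<Longrightarrow> ((\<lambda>t. f (fst x, t)) has_real_derivative Dv f x) (at (snd x))"
  using DERIV_Dv[of f "fst x" "snd x"] by simp

lemma Du_eqI: "((\<lambda>t. f (t, snd x)) has_real_derivative D) (at (fst x)) \<Longrightarrow> Du f x = D"
  unfolding Du_def by (rule DERIV_imp_deriv)

lemma Dv_eqI: "((\<lambda>t. f (fst x, t)) has_real_derivative D) (at (snd x)) \<Longrightarrow> Dv f x = D"
  unfolding Dv_def by (rule DERIV_imp_deriv)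

lemma Du_eqI_on:
  assumes "(g has_real_derivative D) (at s)" "open I" "s \<in> I" "\<And>r. r \<in> I \<Longrightarrow> g r = f (r, t)"
  shows "Du f (s, t) = D"
  using has_field_derivative_transform_within_open[OF assms] by (intro Du_eqI) simp

lemma Dv_eqI_on:
  assumes "(g has_real_derivative D) (at t)" "open I" "t \<in> I" "\<And>r. r \<in> I \<Longrightarrow> g r = f (s, r)"
  shows "Dv f (s, t) = D"
  using has_field_derivative_transform_within_open[OF assms] by (intro Dv_eqI) simp

lemma Du_const [simp]: "Du (\<lambda>y. c) = (\<lambda>y. 0)"
  unfolding Du_def by auto

lemma Dv_const [simp]: "Dv (\<lambda>y. c) = (\<lambda>y. 0)"
  unfolding Dv_def by auto

lemma Du_add:
  "f differentiable (at x) \<Longrightarrow> g differentiable (at x) \<Longrightarrow> Du (\<lambda>y. f y + g y) x = Du f x + Du g x"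
  by (rule Du_eqI, rule DERIV_add; rule DERIV_Du_at)

lemma Dv_add:
  "f differentiable (at x) \<Longrightarrow> g differentiable (at x) \<Longrightarrow> Dv (\<lambda>y. f y + g y) x = Dv f x + Dv g x"
  by (rule Dv_eqI, rule DERIV_add; rule DERIV_Dv_at)

lemma Du_mult:
  assumes "f differentiable (at x)" "g differentiable (at x)"
  shows "Du (\<lambda>y. f y * g y) x = Du f x * g x + f x * Du g x"
  by (rule Du_eqI) (use DERIV_mult[OF DERIV_Du_at[OF assms(1)] DERIV_Du_at[OF assms(2)]] in \<open>simp add: ac_simps\<close>)

lemma Dv_mult:
  assumes "f differentiable (at x)" "g differentiable (at x)"
  shows "Dv (\<lambda>y. f y * g y) x = Dv f x * g x + f x * Dv g x"
  by (rule Dv_eqI) (use DERIV_mult[OF DERIV_Dv_at[OF assms(1)] DERIV_Dv_at[OF assms(2)]] in \<open>simp add: ac_simps\<close>)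

lemma Du_comp:
  assumes "g differentiable (at (a x, b x))" "a differentiable (at x)" "b differentiable (at x)"
  shows "Du (\<lambda>y. g (a y, b y)) x = Du g (a x, b x) * Du a x + Dv g (a x, b x) * Du b x"
  by (rule Du_eqI)
    (use DERIV_comp_Pair[where \<alpha>="\<lambda>t. a (t, snd x)" and \<beta>="\<lambda>t. b (t, snd x)",
        OF _ DERIV_Du_at[OF assms(2)] DERIV_Du_at[OF assms(3)]] assms(1) in simp)

lemma Dv_comp:
  assumes "g differentiable (at (a x, b x))" "a differentiable (at x)" "b differentiable (at x)"
  shows "Dv (\<lambda>y. g (a y, b y)) x = Du g (a x, b x) * Dv a x + Dv g (a x, b x) * Dv b x"
  by (rule Dv_eqI)
    (use DERIV_comp_Pair[where \<alpha>="\<lambda>t. a (fst x, t)" and \<beta>="\<lambda>t. b (fst x, t)",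
        OF _ DERIV_Dv_at[OF assms(2)] DERIV_Dv_at[OF assms(3)]] assms(1) in simp)

lemma differentiable_comp_Pair:
  assumes "g differentiable (at (a x, b x))" "a differentiable (at x)" "b differentiable (at x)"
  shows "(\<lambda>y. g (a y, b y)) differentiable (at x)"
  using differentiable_chain_at[OF differentiable_Pair[OF assms(2,3)]] assms(1) by (simp add: o_def)

lemma open_hline: "open (S :: pt set) \<Longrightarrow> open {s. (s, t) \<in> S}"
  using open_vimage[of S "\<lambda>s::real. (s, t)"] by (simp add: vimage_def continuous_intros)

lemma open_vline: "open (S :: pt set) \<Longrightarrow> open {t. (s, t) \<in> S}"
  using open_vimage[of S "\<lambda>t::real. (s, t)"] by (simp add: vimage_def continuous_intros)

lemma eventually_hline: "open (S :: pt set) \<Longrightarrow> x \<in> S \<Longrightarrow> eventually (\<lambda>t. (t, snd x) \<in> S) (nhds (fst x))"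
  using eventually_nhds_in_open[OF open_hline[of S "snd x"], of "fst x"] by simp

lemma eventually_vline: "open (S :: pt set) \<Longrightarrow> x \<in> S \<Longrightarrow> eventually (\<lambda>t. (fst x, t) \<in> S) (nhds (snd x))"
  using eventually_nhds_in_open[OF open_vline[of S "fst x"], of "snd x"] by simp

lemma Du_cong:
  assumes "open S" "x \<in> S" "\<And>y. y \<in> S \<Longrightarrow> f y = g y"
  shows "Du f x = Du g x"
  unfolding Du_def
  by (rule deriv_cong_ev) (use eventually_hline[OF assms(1,2)] assms(3) in \<open>auto elim: eventually_mono\<close>)

lemma Dv_cong:
  assumes "open S" "x \<in> S" "\<And>y. y \<in> S \<Longrightarrow> f y = g y"
  shows "Dv f x = Dv g x"
  unfolding Dv_def
  by (rule deriv_cong_ev) (use eventually_vline[OF assms(1,2)] assms(3) in \<open>auto elim: eventually_mono\<close>)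

lemma pderivs_cong:
  assumes "open S" "\<And>y. y \<in> S \<Longrightarrow> f y = g y"
  shows "\<forall>x\<in>S. pderivs bs f x = pderivs bs g x"
proof (induction bs)
  case Nil thus ?case using assms by simp
next
  case (Cons b bs)
  hence IH: "\<And>y. y \<in> S \<Longrightarrow> pderivs bs f y = pderivs bs g y" by blast
  show ?case
    using Du_cong[OF assms(1) _ IH] Dv_cong[OF assms(1) _ IH] by simp
qed

lemma Du_eq_0_on_axis:
  assumes "open S" "x \<in> S" "snd x = 0" "\<And>y. y \<in> S \<Longrightarrow> snd y = 0 \<Longrightarrow> f y = 0"
  shows "Du f x = 0"
proof -
  have "eventually (\<lambda>t. f (t, snd x) = 0) (nhds (fst x))"
    using eventually_hline[OF assms(1,2)] by eventually_elim (use assms(3,4) in auto)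
  hence "Du f x = deriv (\<lambda>t. 0) (fst x)" unfolding Du_def by (rule deriv_cong_ev) simp
  thus ?thesis by simp
qed

lemma Dv_eq_0_at_min:
  assumes "open S" "x \<in> S" "f differentiable (at x)" "\<And>y. y \<in> S \<Longrightarrow> f x \<le> f y"
  shows "Dv f x = 0"
proof -
  obtain e where e: "e > 0" "ball x e \<subseteq> S" using assms(1,2) open_contains_ball by blast
  show ?thesis
  proof (rule DERIV_local_min[OF DERIV_Dv_at[OF assms(3)] e(1)], intro allI impI)
    fix y assume "\<bar>snd x - y\<bar> < e"
    hence "dist (fst x, y) x < e" by (cases x) (simp add: dist_Pair_Pair dist_real_def abs_minus_commute)
    hence "(fst x, y) \<in> S" using e by (auto simp: dist_commute)
    thus "f (fst x, snd x) \<le> f (fst x, y)" using assms(4) by simp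
  qed
qed

lemma DERIV_unique_on_open:
  fixes f g :: "real \<Rightarrow> real"
  assumes "open I" "t0 \<in> I" "\<And>t. t \<in> I \<Longrightarrow> f t = g t"
    and "(f has_real_derivative A) (at t0)" "(g has_real_derivative B) (at t0)"
  shows "A = B"
  using has_field_derivative_transform_within_open[OF assms(4,1,2,3)] assms(5) by (rule DERIV_unique)

subsection \<open>Smooth functions of two variables\<close>

definition Ck :: "pt set \<Rightarrow> nat \<Rightarrow> (pt \<Rightarrow> real) \<Rightarrow> bool" where
  "Ck S n f \<longleftrightarrow> (\<forall>bs. length bs \<le> n \<longrightarrow> (\<forall>x\<in>S. pderivs bs f differentiable (at x)))"

lemma pderivs_snoc: "pderivs (bs @ [b]) f = pderivs bs (if b then Du f else Dv f)"
  by (induction bs) auto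

lemma Ck_0: "Ck S 0 f \<longleftrightarrow> (\<forall>x\<in>S. f differentiable (at x))"
  unfolding Ck_def by auto

lemma Ck_Suc: "Ck S (Suc n) f \<longleftrightarrow>
    (\<forall>x\<in>S. f differentiable (at x)) \<and> Ck S n (Du f) \<and> Ck S n (Dv f)"
proof
  assume a: "Ck S (Suc n) f"
  have "\<forall>x\<in>S. f differentiable (at x)" using a[unfolded Ck_def, rule_format, of "[]"] by auto
  moreover have "Ck S n (Du f)" unfolding Ck_def
  proof (intro allI impI ballI)
    fix bs :: "bool list" and x assume "length bs \<le> n" "x \<in> S"
    thus "pderivs bs (Du f) differentiable (at x)"
      using a[unfolded Ck_def, rule_format, of "bs @ [True]" x] by (simp add: pderivs_snoc)
  qed
  moreover have "Ck S n (Dv f)" unfolding Ck_def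
  proof (intro allI impI ballI)
    fix bs :: "bool list" and x assume "length bs \<le> n" "x \<in> S"
    thus "pderivs bs (Dv f) differentiable (at x)"
      using a[unfolded Ck_def, rule_format, of "bs @ [False]" x] by (simp add: pderivs_snoc)
  qed
  ultimately show "(\<forall>x\<in>S. f differentiable (at x)) \<and> Ck S n (Du f) \<and> Ck S n (Dv f)" by blast
next
  assume a: "(\<forall>x\<in>S. f differentiable (at x)) \<and> Ck S n (Du f) \<and> Ck S n (Dv f)"
  show "Ck S (Suc n) f" unfolding Ck_def
  proof (intro allI impI ballI)
    fix bs :: "bool list" and x assume l: "length bs \<le> Suc n" and x: "x \<in> S"
    show "pderivs bs f differentiable (at x)"
    proof (cases bs rule: rev_cases)
      case Nil thus ?thesis using a x by simp
    next
      case (snoc cs b)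
      thus ?thesis using a l x unfolding Ck_def by (cases b) (auto simp: pderivs_snoc)
    qed
  qed
qed

lemma Ck_mono: "Ck S (Suc n) f \<Longrightarrow> Ck S n f"
  unfolding Ck_def by auto

lemma smooth2_iff_Ck: "smooth2_on S f \<longleftrightarrow> (\<forall>n. Ck S n f)"
  unfolding smooth2_on_def Ck_def by (metis order_refl)

lemma smooth2_Du: "smooth2_on S f \<Longrightarrow> smooth2_on S (Du f)"
  unfolding smooth2_iff_Ck by (metis Ck_Suc)

lemma smooth2_Dv: "smooth2_on S f \<Longrightarrow> smooth2_on S (Dv f)"
  unfolding smooth2_iff_Ck by (metis Ck_Suc)

lemma smooth2_differentiable: "smooth2_on S f \<Longrightarrow> x \<in> S \<Longrightarrow> f differentiable (at x)"
  unfolding smooth2_on_def by (metis pderivs.simps(1))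

lemma smooth2_subset: "smooth2_on T f \<Longrightarrow> S \<subseteq> T \<Longrightarrow> smooth2_on S f"
  unfolding smooth2_on_def by blast

lemma smooth2_DERIV_Du: "smooth2_on S f \<Longrightarrow> (s, t) \<in> S \<Longrightarrow> ((\<lambda>s. f (s, t)) has_real_derivative Du f (s, t)) (at s)"
  by (rule DERIV_Du[OF smooth2_differentiable])

lemma smooth2_DERIV_Dv: "smooth2_on S f \<Longrightarrow> (s, t) \<in> S \<Longrightarrow> ((\<lambda>t. f (s, t)) has_real_derivative Dv f (s, t)) (at t)"
  by (rule DERIV_Dv[OF smooth2_differentiable])

lemma Ck_cong:
  assumes "open S" "\<And>y. y \<in> S \<Longrightarrow> f y = g y" "Ck S n f"
  shows "Ck S n g"
  unfolding Ck_def
proof (intro allI impI ballI)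
  fix bs :: "bool list" and x assume "length bs \<le> n" and x: "x \<in> S"
  hence "(pderivs bs f has_derivative frechet_derivative (pderivs bs f) (at x)) (at x)"
    using assms(3) unfolding Ck_def by (simp add: frechet_derivative_works)
  moreover have "\<And>y. y \<in> S \<Longrightarrow> pderivs bs f y = pderivs bs g y"
    using pderivs_cong[of S f g bs] assms(1,2) by blast
  ultimately have "(pderivs bs g has_derivative frechet_derivative (pderivs bs f) (at x)) (at x)"
    by (rule has_derivative_transform_within_open[OF _ assms(1) x])
  thus "pderivs bs g differentiable (at x)" unfolding differentiable_def by blast
qed

lemma Ck_SucI:
  assumes "open S" "\<And>x. x \<in> S \<Longrightarrow> f differentiable (at x)"
    and "\<And>y. y \<in> S \<Longrightarrow> Du f y = fu y" "\<And>y. y \<in> S \<Longrightarrow> Dv f y = fv y"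
    and "Ck S n fu" "Ck S n fv"
  shows "Ck S (Suc n) f"
  using assms Ck_cong[OF assms(1), of fu "Du f" n] Ck_cong[OF assms(1), of fv "Dv f" n]
  by (auto simp: Ck_Suc)

lemma Ck_const: "Ck S n (\<lambda>y. c)"
  by (induction n arbitrary: c) (auto simp: Ck_0 Ck_Suc)

lemma Ck_add: "open S \<Longrightarrow> Ck S n f \<Longrightarrow> Ck S n g \<Longrightarrow> Ck S n (\<lambda>y. f y + g y)"
proof (induction n arbitrary: f g)
  case 0 thus ?case by (auto simp: Ck_0)
next
  case (Suc n)
  hence d: "\<And>x. x \<in> S \<Longrightarrow> f differentiable (at x) \<and> g differentiable (at x)" by (auto simp: Ck_Suc)
  show ?case
  proof (rule Ck_SucI[OF Suc.prems(1)])
    fix y assume "y \<in> S"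
    thus "(\<lambda>y. f y + g y) differentiable (at y)" using d by simp
    show "Du (\<lambda>y. f y + g y) y = Du f y + Du g y" using d \<open>y \<in> S\<close> by (simp add: Du_add)
    show "Dv (\<lambda>y. f y + g y) y = Dv f y + Dv g y" using d \<open>y \<in> S\<close> by (simp add: Dv_add)
  qed (use Suc in \<open>simp_all add: Ck_Suc\<close>)
qed

lemma Ck_mult: "open S \<Longrightarrow> Ck S n f \<Longrightarrow> Ck S n g \<Longrightarrow> Ck S n (\<lambda>y. f y * g y)"
proof (induction n arbitrary: f g)
  case 0 thus ?case by (auto simp: Ck_0)
next
  case (Suc n)
  hence d: "\<And>x. x \<in> S \<Longrightarrow> f differentiable (at x) \<and> g differentiable (at x)" by (auto simp: Ck_Suc)
  have fg: "Ck S n f" "Ck S n g" using Suc.prems Ck_mono by auto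
  show ?case
  proof (rule Ck_SucI[OF Suc.prems(1)])
    fix y assume "y \<in> S"
    thus "(\<lambda>y. f y * g y) differentiable (at y)" using d by simp
    show "Du (\<lambda>y. f y * g y) y = Du f y * g y + f y * Du g y" using d \<open>y \<in> S\<close> by (simp add: Du_mult)
    show "Dv (\<lambda>y. f y * g y) y = Dv f y * g y + f y * Dv g y" using d \<open>y \<in> S\<close> by (simp add: Dv_mult)
  qed (use Suc fg in \<open>auto simp: Ck_Suc intro!: Ck_add\<close>)
qed

lemma Ck_comp:
  assumes S: "open S" and into: "\<And>x. x \<in> S \<Longrightarrow> (a x, b x) \<in> T"
    and a: "smooth2_on S a" and b: "smooth2_on S b"
  shows "Ck T n g \<Longrightarrow> Ck S n (\<lambda>y. g (a y, b y))"
proof (induction n arbitrary: g)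
  case 0
  thus ?case using into smooth2_differentiable[OF a] smooth2_differentiable[OF b]
    by (auto simp: Ck_0 intro!: differentiable_comp_Pair)
next
  case (Suc n)
  have dg: "\<And>x. x \<in> S \<Longrightarrow> g differentiable (at (a x, b x))" using Suc.prems into by (auto simp: Ck_Suc)
  have gn: "Ck S n (\<lambda>y. Du g (a y, b y))" "Ck S n (\<lambda>y. Dv g (a y, b y))"
    using Suc by (auto simp: Ck_Suc)
  have ab: "Ck S n (Du a)" "Ck S n (Dv a)" "Ck S n (Du b)" "Ck S n (Dv b)"
    using a b smooth2_Du smooth2_Dv unfolding smooth2_iff_Ck by blast+
  show ?case
  proof (rule Ck_SucI[OF S])
    fix y assume "y \<in> S"
    note d = dg[OF this] smooth2_differentiable[OF a this] smooth2_differentiable[OF b this]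
    show "(\<lambda>y. g (a y, b y)) differentiable (at y)" by (rule differentiable_comp_Pair[OF d])
    show "Du (\<lambda>y. g (a y, b y)) y = Du g (a y, b y) * Du a y + Dv g (a y, b y) * Du b y"
      by (rule Du_comp[OF d])
    show "Dv (\<lambda>y. g (a y, b y)) y = Du g (a y, b y) * Dv a y + Dv g (a y, b y) * Dv b y"
      by (rule Dv_comp[OF d])
  qed (use gn ab in \<open>auto intro!: Ck_add Ck_mult S\<close>)
qed

lemma smooth2_const: "smooth2_on S (\<lambda>y. c)"
  by (simp add: smooth2_iff_Ck Ck_const)

lemma smooth2_add: "open S \<Longrightarrow> smooth2_on S f \<Longrightarrow> smooth2_on S g \<Longrightarrow> smooth2_on S (\<lambda>y. f y + g y)"
  unfolding smooth2_iff_Ck using Ck_add by blast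

lemma smooth2_mult: "open S \<Longrightarrow> smooth2_on S f \<Longrightarrow> smooth2_on S g \<Longrightarrow> smooth2_on S (\<lambda>y. f y * g y)"
  unfolding smooth2_iff_Ck using Ck_mult by blast

lemma smooth2_comp:
  assumes "open S" "\<And>x. x \<in> S \<Longrightarrow> (a x, b x) \<in> T" "smooth2_on S a" "smooth2_on S b" "smooth2_on T g"
  shows "smooth2_on S (\<lambda>y. g (a y, b y))"
  using Ck_comp[OF assms(1-4)] assms(5) unfolding smooth2_iff_Ck by blast

subsection \<open>Symmetry of mixed partial derivatives\<close>

lemma dist_in_square:
  fixes x0 y0 s t h :: real
  assumes "h > 0" "x0 \<le> s" "s \<le> x0 + h" "y0 \<le> t" "t \<le> y0 + h"
  shows "dist (s, t) (x0, y0) < 2 * h"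
proof -
  have "(s - x0)\<^sup>2 \<le> h\<^sup>2" "(t - y0)\<^sup>2 \<le> h\<^sup>2"
    using assms by (intro power_mono; simp)+
  moreover have "0 < h\<^sup>2" using assms(1) by simp
  moreover have "(2 * h)\<^sup>2 = 4 * h\<^sup>2" by (simp add: power_mult_distrib)
  ultimately have "(s - x0)\<^sup>2 + (t - y0)\<^sup>2 < (2 * h)\<^sup>2" by linarith
  hence "sqrt ((s - x0)\<^sup>2 + (t - y0)\<^sup>2) < sqrt ((2 * h)\<^sup>2)" by (rule real_sqrt_less_mono)
  also have "\<dots> = 2 * h" using assms(1) by (simp only: real_sqrt_abs)
  finally show ?thesis by (simp add: dist_Pair_Pair dist_real_def)
qed

text \<open>The second difference of \<open>f\<close> over a square, evaluated by the mean value theorem in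
  either order.\<close>

lemma mixed_partials_mean_value:
  assumes f: "smooth2_on S f" and h: "h > 0"
    and square: "\<And>s t. x0 \<le> s \<Longrightarrow> s \<le> x0 + h \<Longrightarrow> y0 \<le> t \<Longrightarrow> t \<le> y0 + h \<Longrightarrow> (s, t) \<in> S"
  obtains \<xi> \<eta> \<xi>' \<eta>' where "x0 < \<xi>" "\<xi> < x0 + h" "y0 < \<eta>" "\<eta> < y0 + h"
    "x0 < \<xi>'" "\<xi>' < x0 + h" "y0 < \<eta>'" "\<eta>' < y0 + h"
    "Dv (Du f) (\<xi>, \<eta>) = Du (Dv f) (\<xi>', \<eta>')"
proof -
  define \<Delta> where "\<Delta> = f (x0 + h, y0 + h) - f (x0 + h, y0) - f (x0, y0 + h) + f (x0, y0)"
  have "\<exists>\<xi>. x0 < \<xi> \<and> \<xi> < x0 + h \<and>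
      (f (x0 + h, y0 + h) - f (x0 + h, y0)) - (f (x0, y0 + h) - f (x0, y0))
        = (x0 + h - x0) * (Du f (\<xi>, y0 + h) - Du f (\<xi>, y0))"
  proof (rule MVT2)
    fix s assume "x0 \<le> s" "s \<le> x0 + h"
    hence "(s, y0 + h) \<in> S" "(s, y0) \<in> S" using square h by auto
    thus "((\<lambda>s. f (s, y0 + h) - f (s, y0)) has_real_derivative Du f (s, y0 + h) - Du f (s, y0)) (at s)"
      by (intro DERIV_diff smooth2_DERIV_Du[OF f])
  qed (use h in simp)
  then obtain \<xi> where \<xi>: "x0 < \<xi>" "\<xi> < x0 + h" "\<Delta> = h * (Du f (\<xi>, y0 + h) - Du f (\<xi>, y0))"
    unfolding \<Delta>_def by (auto simp: algebra_simps)
  have "\<exists>\<eta>. y0 < \<eta> \<and> \<eta> < y0 + h \<and>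
      Du f (\<xi>, y0 + h) - Du f (\<xi>, y0) = (y0 + h - y0) * Dv (Du f) (\<xi>, \<eta>)"
  proof (rule MVT2)
    fix t assume "y0 \<le> t" "t \<le> y0 + h"
    hence "(\<xi>, t) \<in> S" using square \<xi> by auto
    thus "((\<lambda>t. Du f (\<xi>, t)) has_real_derivative Dv (Du f) (\<xi>, t)) (at t)"
      by (rule smooth2_DERIV_Dv[OF smooth2_Du[OF f]])
  qed (use h in simp)
  then obtain \<eta> where \<eta>: "y0 < \<eta>" "\<eta> < y0 + h" "Du f (\<xi>, y0 + h) - Du f (\<xi>, y0) = h * Dv (Du f) (\<xi>, \<eta>)"
    by auto
  have "\<exists>\<eta>'. y0 < \<eta>' \<and> \<eta>' < y0 + h \<and>
      (f (x0 + h, y0 + h) - f (x0, y0 + h)) - (f (x0 + h, y0) - f (x0, y0))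
        = (y0 + h - y0) * (Dv f (x0 + h, \<eta>') - Dv f (x0, \<eta>'))"
  proof (rule MVT2)
    fix t assume "y0 \<le> t" "t \<le> y0 + h"
    hence "(x0 + h, t) \<in> S" "(x0, t) \<in> S" using square h by auto
    thus "((\<lambda>t. f (x0 + h, t) - f (x0, t)) has_real_derivative Dv f (x0 + h, t) - Dv f (x0, t)) (at t)"
      by (intro DERIV_diff smooth2_DERIV_Dv[OF f])
  qed (use h in simp)
  then obtain \<eta>' where \<eta>': "y0 < \<eta>'" "\<eta>' < y0 + h" "\<Delta> = h * (Dv f (x0 + h, \<eta>') - Dv f (x0, \<eta>'))"
    unfolding \<Delta>_def by (auto simp: algebra_simps)
  have "\<exists>\<xi>'. x0 < \<xi>' \<and> \<xi>' < x0 + h \<and>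
      Dv f (x0 + h, \<eta>') - Dv f (x0, \<eta>') = (x0 + h - x0) * Du (Dv f) (\<xi>', \<eta>')"
  proof (rule MVT2)
    fix s assume "x0 \<le> s" "s \<le> x0 + h"
    hence "(s, \<eta>') \<in> S" using square \<eta>' by auto
    thus "((\<lambda>s. Dv f (s, \<eta>')) has_real_derivative Du (Dv f) (s, \<eta>')) (at s)"
      by (rule smooth2_DERIV_Du[OF smooth2_Dv[OF f]])
  qed (use h in simp)
  then obtain \<xi>' where \<xi>': "x0 < \<xi>'" "\<xi>' < x0 + h"
      "Dv f (x0 + h, \<eta>') - Dv f (x0, \<eta>') = h * Du (Dv f) (\<xi>', \<eta>')"
    by auto
  have "h * (h * Dv (Du f) (\<xi>, \<eta>)) = h * (h * Du (Dv f) (\<xi>', \<eta>'))"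
    using \<xi>(3) \<eta>(3) \<eta>'(3) \<xi>'(3) by (simp, metis)
  hence "Dv (Du f) (\<xi>, \<eta>) = Du (Dv f) (\<xi>', \<eta>')" using h by simp
  from that[OF \<xi>(1,2) \<eta>(1,2) \<xi>'(1,2) \<eta>'(1,2) this] show ?thesis .
qed

theorem schwarz:
  assumes S: "open S" and f: "smooth2_on S f" and x: "x \<in> S"
  shows "Du (Dv f) x = Dv (Du f) x"
proof -
  define g1 where "g1 = Dv (Du f)"
  define g2 where "g2 = Du (Dv f)"
  have cont: "continuous (at x) g1" "continuous (at x) g2" unfolding g1_def g2_def
    using f x by (meson differentiable_imp_continuous_within smooth2_differentiable smooth2_Du smooth2_Dv)+
  obtain x0 y0 where xe: "x = (x0, y0)" by (cases x)
  obtain e where e: "e > 0" "ball x e \<subseteq> S" using S x open_contains_ball by blast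
  have "\<bar>g1 x - g2 x\<bar> < \<epsilon>" if \<epsilon>: "\<epsilon> > 0" for \<epsilon>
  proof -
    obtain d1 where d1: "d1 > 0" "\<And>z. dist z x < d1 \<Longrightarrow> dist (g1 z) (g1 x) < \<epsilon>/2"
      using cont(1) \<epsilon> unfolding continuous_at_eps_delta by (metis half_gt_zero)
    obtain d2 where d2: "d2 > 0" "\<And>z. dist z x < d2 \<Longrightarrow> dist (g2 z) (g2 x) < \<epsilon>/2"
      using cont(2) \<epsilon> unfolding continuous_at_eps_delta by (metis half_gt_zero)
    define h where "h = min e (min d1 d2) / 2"
    have h: "h > 0" using e d1 d2 by (simp add: h_def)
    have near: "dist (s, t) x < min e (min d1 d2)"
      if "x0 \<le> s" "s \<le> x0 + h" "y0 \<le> t" "t \<le> y0 + h" for s t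
      using dist_in_square[OF h that] xe by (simp add: h_def)
    have "(s, t) \<in> S" if "x0 \<le> s" "s \<le> x0 + h" "y0 \<le> t" "t \<le> y0 + h" for s t
      using near[OF that] e by (auto simp: dist_commute)
    then obtain \<xi> \<eta> \<xi>' \<eta>' where box: "x0 < \<xi>" "\<xi> < x0 + h" "y0 < \<eta>" "\<eta> < y0 + h"
        "x0 < \<xi>'" "\<xi>' < x0 + h" "y0 < \<eta>'" "\<eta>' < y0 + h"
      and eq: "g1 (\<xi>, \<eta>) = g2 (\<xi>', \<eta>')"
      using mixed_partials_mean_value[OF f h] unfolding g1_def g2_def by blast
    have "\<bar>g1 (\<xi>, \<eta>) - g1 x\<bar> < \<epsilon>/2" using d1(2) near[of \<xi> \<eta>] box by (simp add: dist_real_def)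
    moreover have "\<bar>g2 (\<xi>', \<eta>') - g2 x\<bar> < \<epsilon>/2" using d2(2) near[of \<xi>' \<eta>'] box by (simp add: dist_real_def)
    ultimately show "\<bar>g1 x - g2 x\<bar> < \<epsilon>" using eq by linarith
  qed
  hence "g1 x = g2 x" by (metis less_irrefl zero_less_abs_iff right_minus_eq)
  thus ?thesis by (simp add: g1_def g2_def)
qed

subsection \<open>The metric in a chart\<close>

lemma ip_sym: "ip E0 F0 G0 x a b = ip E0 F0 G0 x b a"
  unfolding ip_def by (simp add: algebra_simps)

lemma ip_scaleR_add_left:
  "ip E0 F0 G0 x (c *\<^sub>R a + d *\<^sub>R b) w = c * ip E0 F0 G0 x a w + d * ip E0 F0 G0 x b w"
  unfolding ip_def by (simp add: algebra_simps)

lemma ip_scaleR_add_both: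
  "ip E0 F0 G0 x (\<alpha> *\<^sub>R A + \<beta> *\<^sub>R B) (\<gamma> *\<^sub>R A + \<delta> *\<^sub>R B) =
     \<alpha> * \<gamma> * ip E0 F0 G0 x A A + (\<alpha> * \<delta> + \<beta> * \<gamma>) * ip E0 F0 G0 x A B + \<beta> * \<delta> * ip E0 F0 G0 x B B"
  unfolding ip_def by (simp add: algebra_simps)

lemma smoothV_subset: "smoothV_on V phi \<Longrightarrow> N \<subseteq> V \<Longrightarrow> smoothV_on N phi"
  unfolding smoothV_on_def using smooth2_subset by blast

lemma smoothV_const: "smoothV_on U (\<lambda>_. X)"
  unfolding smoothV_on_def by (simp add: smooth2_const)

lemma continuous_on_smoothV:
  assumes "smoothV_on V phi"
  shows "continuous_on V phi"
proof -
  have "continuous (at x) (\<lambda>y. (fst (phi y), snd (phi y)))" if "x \<in> V" for x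
    using assms that unfolding smoothV_on_def
    by (intro differentiable_imp_continuous_within differentiable_Pair smooth2_differentiable) auto
  thus ?thesis by (simp add: continuous_at_imp_continuous_on)
qed

lemma smooth2_comp_smoothV:
  assumes "open V" "phi ` V \<subseteq> U" "smoothV_on V phi" "smooth2_on U g"
  shows "smooth2_on V (\<lambda>y. g (phi y))"
  using smooth2_comp[OF assms(1), of "\<lambda>y. fst (phi y)" "\<lambda>y. snd (phi y)" U g] assms
  unfolding smoothV_on_def by auto

lemma smooth2_coefficients:
  assumes psd: "psd_metric U E0 F0 G0" and V: "open V" and into: "phi ` V \<subseteq> U"
    and phi: "smoothV_on V phi"
  shows "smooth2_on V (cE E0 F0 G0 phi)" "smooth2_on V (cF E0 F0 G0 phi)" "smooth2_on V (cG E0 F0 G0 phi)"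
proof -
  have metric: "smooth2_on V (\<lambda>y. E0 (phi y))" "smooth2_on V (\<lambda>y. F0 (phi y))"
      "smooth2_on V (\<lambda>y. G0 (phi y))"
    using psd smooth2_comp_smoothV[OF V into phi] unfolding psd_metric_def by auto
  have frame: "smooth2_on V (Du (\<lambda>y. fst (phi y)))" "smooth2_on V (Du (\<lambda>y. snd (phi y)))"
      "smooth2_on V (Dv (\<lambda>y. fst (phi y)))" "smooth2_on V (Dv (\<lambda>y. snd (phi y)))"
    using phi smooth2_Du smooth2_Dv unfolding smoothV_on_def by auto
  note ops = smooth2_add[OF V] smooth2_mult[OF V]
  show "smooth2_on V (cE E0 F0 G0 phi)"
    unfolding cE_def[abs_def] ip_def DuV_def fst_conv snd_conv by (intro ops metric frame)
  show "smooth2_on V (cF E0 F0 G0 phi)"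
    unfolding cF_def[abs_def] ip_def DuV_def DvV_def fst_conv snd_conv by (intro ops metric frame)
  show "smooth2_on V (cG E0 F0 G0 phi)"
    unfolding cG_def[abs_def] ip_def DvV_def fst_conv snd_conv by (intro ops metric frame)
qed

lemma cF_cG_null:
  assumes "DvV phi q \<in> null_space E0 F0 G0 (phi q)"
  shows "cF E0 F0 G0 phi q = 0" "cG E0 F0 G0 phi q = 0"
proof -
  have "\<And>w. ip E0 F0 G0 (phi q) (DvV phi q) w = 0" using assms unfolding null_space_def by blast
  thus "cF E0 F0 G0 phi q = 0" "cG E0 F0 G0 phi q = 0"
    unfolding cF_def cG_def by (simp_all add: ip_sym[of _ _ _ _ "DuV phi q"])
qed

lemma cE_cG_nonneg:
  assumes "psd_metric U E0 F0 G0" "phi q \<in> U"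
  shows "cE E0 F0 G0 phi q \<ge> 0" "cG E0 F0 G0 phi q \<ge> 0"
  using assms unfolding psd_metric_def cE_def cG_def by blast+

subsection \<open>Derivatives of the metric coefficients\<close>

text \<open>\<open>metric_deriv E0 F0 G0 p A B C\<close> is the derivative, in direction \<open>A\<close>, of the inner product
  of the constant vector fields \<open>B\<close> and \<open>C\<close>.\<close>

definition metric_deriv :: "(pt \<Rightarrow> real) \<Rightarrow> (pt \<Rightarrow> real) \<Rightarrow> (pt \<Rightarrow> real) \<Rightarrow> pt \<Rightarrow> pt \<Rightarrow> pt \<Rightarrow> pt \<Rightarrow> real"
  where "metric_deriv E0 F0 G0 p A B C =
     fst A * (Du E0 p * fst B * fst C + Du F0 p * (fst B * snd C + snd B * fst C) + Du G0 p * snd B * snd C)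
   + snd A * (Dv E0 p * fst B * fst C + Dv F0 p * (fst B * snd C + snd B * fst C) + Dv G0 p * snd B * snd C)"

lemma vf_app_ipf_const:
  assumes "E0 differentiable (at p)" "F0 differentiable (at p)" "G0 differentiable (at p)"
  shows "vf_app (\<lambda>_. A) (ipf E0 F0 G0 (\<lambda>_. B) (\<lambda>_. C)) p = metric_deriv E0 F0 G0 p A B C"
proof -
  have ipf: "ipf E0 F0 G0 (\<lambda>_. B) (\<lambda>_. C) =
      (\<lambda>x. E0 x * (fst B * fst C) + F0 x * (fst B * snd C + snd B * fst C) + G0 x * (snd B * snd C))"
    unfolding ipf_def ip_def by (auto simp: algebra_simps)
  have "Du (ipf E0 F0 G0 (\<lambda>_. B) (\<lambda>_. C)) p =
      Du E0 p * fst B * fst C + Du F0 p * (fst B * snd C + snd B * fst C) + Du G0 p * snd B * snd C"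
    unfolding ipf using DERIV_Du_at[OF assms(1)] DERIV_Du_at[OF assms(2)] DERIV_Du_at[OF assms(3)]
    by (intro Du_eqI) (auto intro!: derivative_eq_intros simp: algebra_simps)
  moreover have "Dv (ipf E0 F0 G0 (\<lambda>_. B) (\<lambda>_. C)) p =
      Dv E0 p * fst B * fst C + Dv F0 p * (fst B * snd C + snd B * fst C) + Dv G0 p * snd B * snd C"
    unfolding ipf using DERIV_Dv_at[OF assms(1)] DERIV_Dv_at[OF assms(2)] DERIV_Dv_at[OF assms(3)]
    by (intro Dv_eqI) (auto intro!: derivative_eq_intros simp: algebra_simps)
  ultimately show ?thesis unfolding vf_app_def metric_deriv_def by simp
qed

lemma kossowski_Gamma_const:
  assumes "E0 differentiable (at p)" "F0 differentiable (at p)" "G0 differentiable (at p)"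
  shows "kossowski_Gamma E0 F0 G0 (\<lambda>_. X) (\<lambda>_. Y) (\<lambda>_. Z) p =
     (metric_deriv E0 F0 G0 p X Y Z + metric_deriv E0 F0 G0 p Y X Z - metric_deriv E0 F0 G0 p Z X Y) / 2"
proof -
  have "lie (\<lambda>_. A) (\<lambda>_. B) p = (0, 0)" for A B unfolding lie_def vf_app_def by simp
  moreover have "ip E0 F0 G0 p (0, 0) w = 0" for w unfolding ip_def by simp
  ultimately show ?thesis unfolding kossowski_Gamma_def vf_app_ipf_const[OF assms] by simp
qed

lemma DERIV_comp_chart_vline:
  assumes "g differentiable (at (phi q))" "smoothV_on V phi" "q \<in> V"
  shows "((\<lambda>t. g (phi (fst q, t))) has_real_derivative
     Du g (phi q) * Dv (\<lambda>y. fst (phi y)) q + Dv g (phi q) * Dv (\<lambda>y. snd (phi y)) q) (at (snd q))"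
  using DERIV_comp_Pair[where g=g and \<alpha>="\<lambda>t. fst (phi (fst q, t))" and \<beta>="\<lambda>t. snd (phi (fst q, t))",
      OF _ DERIV_Dv_at DERIV_Dv_at] assms smooth2_differentiable[of V _ q]
  unfolding smoothV_on_def by fastforce

lemma DERIV_comp_chart_hline:
  assumes "g differentiable (at (phi q))" "smoothV_on V phi" "q \<in> V"
  shows "((\<lambda>t. g (phi (t, snd q))) has_real_derivative
     Du g (phi q) * Du (\<lambda>y. fst (phi y)) q + Dv g (phi q) * Du (\<lambda>y. snd (phi y)) q) (at (fst q))"
  using DERIV_comp_Pair[where g=g and \<alpha>="\<lambda>t. fst (phi (t, snd q))" and \<beta>="\<lambda>t. snd (phi (t, snd q))",
      OF _ DERIV_Du_at DERIV_Du_at] assms smooth2_differentiable[of V _ q]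
  unfolding smoothV_on_def by fastforce

lemma Dv_cE:
  assumes "E0 differentiable (at (phi q))" "F0 differentiable (at (phi q))" "G0 differentiable (at (phi q))"
    and phi: "smoothV_on V phi" and q: "q \<in> V"
  shows "Dv (cE E0 F0 G0 phi) q = metric_deriv E0 F0 G0 (phi q) (DvV phi q) (DuV phi q) (DuV phi q)
     + 2 * ip E0 F0 G0 (phi q) (DuV phi q) (Dv (Du (\<lambda>y. fst (phi y))) q, Dv (Du (\<lambda>y. snd (phi y))) q)"
proof (rule Dv_eqI)
  have "Du (\<lambda>y. fst (phi y)) differentiable (at q)" "Du (\<lambda>y. snd (phi y)) differentiable (at q)"
    using phi q by (auto intro: smooth2_differentiable smooth2_Du simp: smoothV_on_def)
  note derivs = DERIV_comp_chart_vline[OF assms(1) phi q] DERIV_comp_chart_vline[OF assms(2) phi q]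
      DERIV_comp_chart_vline[OF assms(3) phi q] DERIV_Dv_at[OF this(1)] DERIV_Dv_at[OF this(2)]
  show "((\<lambda>t. cE E0 F0 G0 phi (fst q, t)) has_real_derivative
     metric_deriv E0 F0 G0 (phi q) (DvV phi q) (DuV phi q) (DuV phi q)
     + 2 * ip E0 F0 G0 (phi q) (DuV phi q) (Dv (Du (\<lambda>y. fst (phi y))) q, Dv (Du (\<lambda>y. snd (phi y))) q))
     (at (snd q))"
    unfolding cE_def ip_def DuV_def DvV_def fst_conv snd_conv using derivs
    by (auto intro!: derivative_eq_intros simp: metric_deriv_def algebra_simps)
qed

lemma Du_cF:
  assumes "E0 differentiable (at (phi q))" "F0 differentiable (at (phi q))" "G0 differentiable (at (phi q))"
    and phi: "smoothV_on V phi" and q: "q \<in> V"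
  shows "Du (cF E0 F0 G0 phi) q = metric_deriv E0 F0 G0 (phi q) (DuV phi q) (DuV phi q) (DvV phi q)
     + ip E0 F0 G0 (phi q) (Du (Du (\<lambda>y. fst (phi y))) q, Du (Du (\<lambda>y. snd (phi y))) q) (DvV phi q)
     + ip E0 F0 G0 (phi q) (DuV phi q) (Du (Dv (\<lambda>y. fst (phi y))) q, Du (Dv (\<lambda>y. snd (phi y))) q)"
proof (rule Du_eqI)
  have "Du (\<lambda>y. fst (phi y)) differentiable (at q)" "Du (\<lambda>y. snd (phi y)) differentiable (at q)"
      "Dv (\<lambda>y. fst (phi y)) differentiable (at q)" "Dv (\<lambda>y. snd (phi y)) differentiable (at q)"
    using phi q by (auto intro: smooth2_differentiable smooth2_Du smooth2_Dv simp: smoothV_on_def)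
  note derivs = DERIV_comp_chart_hline[OF assms(1) phi q] DERIV_comp_chart_hline[OF assms(2) phi q]
      DERIV_comp_chart_hline[OF assms(3) phi q] DERIV_Du_at[OF this(1)] DERIV_Du_at[OF this(2)]
      DERIV_Du_at[OF this(3)] DERIV_Du_at[OF this(4)]
  show "((\<lambda>t. cF E0 F0 G0 phi (t, snd q)) has_real_derivative
     metric_deriv E0 F0 G0 (phi q) (DuV phi q) (DuV phi q) (DvV phi q)
     + ip E0 F0 G0 (phi q) (Du (Du (\<lambda>y. fst (phi y))) q, Du (Du (\<lambda>y. snd (phi y))) q) (DvV phi q)
     + ip E0 F0 G0 (phi q) (DuV phi q) (Du (Dv (\<lambda>y. fst (phi y))) q, Du (Dv (\<lambda>y. snd (phi y))) q))
     (at (fst q))"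
    unfolding cF_def ip_def DuV_def DvV_def fst_conv snd_conv using derivs
    by (auto intro!: derivative_eq_intros simp: metric_deriv_def algebra_simps)
qed

lemma DERIV_square_eq_det:
  fixes l e g f l' e' g' f' :: "real \<Rightarrow> real"
  assumes I: "open I" "t0 \<in> I"
    and eq: "\<And>t. t \<in> I \<Longrightarrow> (l t)\<^sup>2 = e t * g t - (f t)\<^sup>2"
    and dl: "\<And>t. t \<in> I \<Longrightarrow> (l has_real_derivative l' t) (at t)"
    and de: "\<And>t. t \<in> I \<Longrightarrow> (e has_real_derivative e' t) (at t)"
    and dg: "\<And>t. t \<in> I \<Longrightarrow> (g has_real_derivative g' t) (at t)"
    and df: "\<And>t. t \<in> I \<Longrightarrow> (f has_real_derivative f' t) (at t)"
    and d2: "(l' has_real_derivative l2) (at t0)" "(e' has_real_derivative e2) (at t0)"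
      "(g' has_real_derivative g2) (at t0)" "(f' has_real_derivative f2) (at t0)"
    and z: "f t0 = 0" "g t0 = 0" "g' t0 = 0"
  shows "2 * (l' t0)\<^sup>2 = e t0 * g2 - 2 * (f' t0)\<^sup>2"
proof -
  have first: "2 * l t * l' t = e' t * g t + e t * g' t - 2 * f t * f' t" if t: "t \<in> I" for t
  proof (rule DERIV_unique_on_open[OF I(1) t eq])
    show "((\<lambda>t. (l t)\<^sup>2) has_real_derivative 2 * l t * l' t) (at t)"
      using dl[OF t] by (auto intro!: derivative_eq_intros)
    show "((\<lambda>t. e t * g t - (f t)\<^sup>2) has_real_derivative e' t * g t + e t * g' t - 2 * f t * f' t) (at t)"
      using de[OF t] dg[OF t] df[OF t] by (auto intro!: derivative_eq_intros simp: algebra_simps)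
  qed
  have "l t0 = 0" using eq[OF I(2)] z by simp
  moreover have "2 * (l' t0 * l' t0 + l t0 * l2)
      = e2 * g t0 + e' t0 * g' t0 + (e' t0 * g' t0 + e t0 * g2) - 2 * (f' t0 * f' t0 + f t0 * f2)"
  proof (rule DERIV_unique_on_open[OF I first])
    show "((\<lambda>t. 2 * l t * l' t) has_real_derivative 2 * (l' t0 * l' t0 + l t0 * l2)) (at t0)"
      using dl[OF I(2)] d2(1) by (auto intro!: derivative_eq_intros simp: algebra_simps)
    show "((\<lambda>t. e' t * g t + e t * g' t - 2 * f t * f' t) has_real_derivative
       e2 * g t0 + e' t0 * g' t0 + (e' t0 * g' t0 + e t0 * g2) - 2 * (f' t0 * f' t0 + f t0 * f2)) (at t0)"
      using de[OF I(2)] dg[OF I(2)] df[OF I(2)] d2 by (auto intro!: derivative_eq_intros simp: algebra_simps)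
  qed
  ultimately show ?thesis using z by (simp add: power2_eq_square)
qed

lemma Dv_lambda_square:
  assumes V: "open V" and E: "smooth2_on V E" and F: "smooth2_on V F" and G: "smooth2_on V G"
    and lam: "smooth2_on V lam" and det: "\<And>y. y \<in> V \<Longrightarrow> E y * G y - (F y)\<^sup>2 = (lam y)\<^sup>2"
    and q: "(s, t0) \<in> V" and z: "F (s, t0) = 0" "G (s, t0) = 0" "Dv G (s, t0) = 0"
  shows "2 * (Dv lam (s, t0))\<^sup>2 = E (s, t0) * Dv (Dv G) (s, t0) - 2 * (Dv F (s, t0))\<^sup>2"
proof (rule DERIV_square_eq_det[where l="\<lambda>t. lam (s, t)" and e="\<lambda>t. E (s, t)" and g="\<lambda>t. G (s, t)"
    and f="\<lambda>t. F (s, t)" and l'="\<lambda>t. Dv lam (s, t)" and e'="\<lambda>t. Dv E (s, t)"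
    and g'="\<lambda>t. Dv G (s, t)" and f'="\<lambda>t. Dv F (s, t)", OF open_vline[OF V]])
  fix t assume "t \<in> {t. (s, t) \<in> V}"
  hence st: "(s, t) \<in> V" by simp
  show "(lam (s, t))\<^sup>2 = E (s, t) * G (s, t) - (F (s, t))\<^sup>2" using det[OF st] by simp
  show "((\<lambda>t. lam (s, t)) has_real_derivative Dv lam (s, t)) (at t)" by (rule smooth2_DERIV_Dv[OF lam st])
  show "((\<lambda>t. E (s, t)) has_real_derivative Dv E (s, t)) (at t)" by (rule smooth2_DERIV_Dv[OF E st])
  show "((\<lambda>t. G (s, t)) has_real_derivative Dv G (s, t)) (at t)" by (rule smooth2_DERIV_Dv[OF G st])
  show "((\<lambda>t. F (s, t)) has_real_derivative Dv F (s, t)) (at t)" by (rule smooth2_DERIV_Dv[OF F st])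
qed (use q z in \<open>auto intro!: smooth2_DERIV_Dv smooth2_Dv lam E F G\<close>)

subsection \<open>Strongly adapted charts\<close>

locale strongly_adapted_chart =
  fixes U :: "pt set" and E0 F0 G0 :: "pt \<Rightarrow> real" and V :: "pt set" and phi :: "pt \<Rightarrow> pt"
    and lam :: "pt \<Rightarrow> real"
  assumes psd: "psd_metric U E0 F0 G0"
    and chart: "coord_system U V phi"
    and singular_iff: "\<And>q. q \<in> V \<Longrightarrow> singular_pt U E0 F0 G0 (phi q) \<longleftrightarrow> snd q = 0"
    and null_Dv: "\<And>q. q \<in> V \<Longrightarrow> snd q = 0 \<Longrightarrow> DvV phi q \<in> null_space E0 F0 G0 (phi q)"
    and lambda: "good_lambda E0 F0 G0 V phi lam"
begin

abbreviation "E \<equiv> cE E0 F0 G0 phi"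
abbreviation "F \<equiv> cF E0 F0 G0 phi"
abbreviation "G \<equiv> cG E0 F0 G0 phi"

lemma open_V: "open V" and phi_into: "phi ` V \<subseteq> U" and smooth_phi: "smoothV_on V phi"
  using chart unfolding coord_system_def by blast+

lemma smooth_E: "smooth2_on V E" and smooth_F: "smooth2_on V F" and smooth_G: "smooth2_on V G"
  using smooth2_coefficients[OF psd open_V phi_into smooth_phi] by auto

lemma smooth_lam: "smooth2_on V lam"
  and lam_square: "\<And>y. y \<in> V \<Longrightarrow> E y * G y - (F y)\<^sup>2 = (lam y)\<^sup>2"
  and Dv_lam_pos: "\<And>q. q \<in> V \<Longrightarrow> snd q = 0 \<Longrightarrow> Dv lam q > 0"
  using lambda unfolding good_lambda_def by blast+

lemma metric_differentiable:
  assumes "q \<in> V"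
  shows "E0 differentiable (at (phi q))" "F0 differentiable (at (phi q))" "G0 differentiable (at (phi q))"
  using psd phi_into assms unfolding psd_metric_def by (auto intro: smooth2_differentiable)

lemma F_G_axis: "q \<in> V \<Longrightarrow> snd q = 0 \<Longrightarrow> F q = 0 \<and> G q = 0"
  using cF_cG_null[OF null_Dv] by blast

lemma E_G_nonneg: "q \<in> V \<Longrightarrow> E q \<ge> 0 \<and> G q \<ge> 0"
  using cE_cG_nonneg[OF psd] phi_into by blast

text \<open>\<open>G\<close> is nonnegative and vanishes on the axis, so it is minimal there.\<close>

lemma Dv_G_axis:
  assumes "q \<in> V" "snd q = 0"
  shows "Dv G q = 0"
proof (rule Dv_eq_0_at_min[OF open_V assms(1) smooth2_differentiable[OF smooth_G assms(1)]])
  fix y assume "y \<in> V" thus "G q \<le> G y" using F_G_axis[OF assms] E_G_nonneg by simp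
qed

lemma Du_F_axis: "q \<in> V \<Longrightarrow> snd q = 0 \<Longrightarrow> Du F q = 0"
  by (rule Du_eq_0_on_axis[OF open_V]) (use F_G_axis in auto)

lemma Dv_lam_square_axis:
  assumes "q \<in> V" "snd q = 0"
  shows "2 * (Dv lam q)\<^sup>2 = E q * Dv (Dv G) q - 2 * (Dv F q)\<^sup>2"
  by (rule Dv_lambda_square[OF open_V smooth_E smooth_F smooth_G smooth_lam lam_square,
      of "fst q" "snd q", unfolded prod.collapse])
    (use assms F_G_axis[OF assms] Dv_G_axis[OF assms] in auto)

lemma E_pos_axis:
  assumes "q \<in> V" "snd q = 0"
  shows "E q > 0"
proof -
  have "0 < 2 * (Dv lam q)\<^sup>2" using Dv_lam_pos[OF assms] by simp
  also have "\<dots> \<le> E q * Dv (Dv G) q" using Dv_lam_square_axis[OF assms] by simp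
  finally show ?thesis using E_G_nonneg[OF assms(1)] by (cases "E q = 0") auto
qed

lemma Dv_lam_axis:
  assumes "q \<in> V" "snd q = 0"
  shows "Dv lam q = sqrt ((E q * Dv (Dv G) q - 2 * (Dv F q)\<^sup>2) / 2)"
proof -
  have "(E q * Dv (Dv G) q - 2 * (Dv F q)\<^sup>2) / 2 = (Dv lam q)\<^sup>2"
    using Dv_lam_square_axis[OF assms] by simp
  hence "sqrt ((E q * Dv (Dv G) q - 2 * (Dv F q)\<^sup>2) / 2) = sqrt ((Dv lam q)\<^sup>2)" by (rule arg_cong)
  thus ?thesis using Dv_lam_pos[OF assms] by simp
qed

end

text \<open>Admissibility, applied to the constant fields \<open>\<partial>\<^sub>u, \<partial>\<^sub>u, \<partial>\<^sub>v\<close>, makes \<open>E\<^sub>v\<close> vanish on the axis.\<close>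

locale admissible_strongly_adapted_chart = strongly_adapted_chart +
  assumes admissible: "admissible U E0 F0 G0"
begin

lemma Dv_E_axis:
  assumes q: "q \<in> V" "snd q = 0"
  shows "Dv E q = 0"
proof -
  define X where "X = DuV phi q"
  define Z where "Z = DvV phi q"
  define P1 where "P1 = (\<lambda>y. fst (phi y))"
  define P2 where "P2 = (\<lambda>y. snd (phi y))"
  note diff = metric_differentiable[OF q(1)]
  have Z: "Z \<in> null_space E0 F0 G0 (phi q)" unfolding Z_def by (rule null_Dv[OF q])
  have "kossowski_Gamma E0 F0 G0 (\<lambda>_. X) (\<lambda>_. X) (\<lambda>_. Z) (phi q) = 0"
    using admissible singular_iff[OF q(1)] q(2) Z smoothV_const unfolding admissible_def by blast
  hence Gamma: "2 * metric_deriv E0 F0 G0 (phi q) X X Z - metric_deriv E0 F0 G0 (phi q) Z X X = 0"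
    using kossowski_Gamma_const[OF diff, of X X Z] by simp
  have "Du (Dv P1) q = Dv (Du P1) q" "Du (Dv P2) q = Dv (Du P2) q"
    using schwarz[OF open_V _ q(1)] smooth_phi unfolding P1_def P2_def smoothV_on_def by auto
  hence "Du F q = metric_deriv E0 F0 G0 (phi q) X X Z
     + ip E0 F0 G0 (phi q) (Du (Du P1) q, Du (Du P2) q) Z
     + ip E0 F0 G0 (phi q) X (Dv (Du P1) q, Dv (Du P2) q)"
    using Du_cF[OF diff smooth_phi q(1)] unfolding X_def Z_def P1_def P2_def by simp
  moreover have "ip E0 F0 G0 (phi q) (Du (Du P1) q, Du (Du P2) q) Z = 0"
    using Z ip_sym[of E0 F0 G0 "phi q" _ Z] unfolding null_space_def by simp
  ultimately have F: "metric_deriv E0 F0 G0 (phi q) X X Z + ip E0 F0 G0 (phi q) X (Dv (Du P1) q, Dv (Du P2) q) = 0"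
    using Du_F_axis[OF q] by simp
  have "Dv E q = metric_deriv E0 F0 G0 (phi q) Z X X + 2 * ip E0 F0 G0 (phi q) X (Dv (Du P1) q, Dv (Du P2) q)"
    using Dv_cE[OF diff smooth_phi q(1)] unfolding X_def Z_def P1_def P2_def by simp
  thus ?thesis using F Gamma by simp
qed

end

subsection \<open>Change of strongly adapted coordinates\<close>

locale axis_transition =
  fixes N V2 :: "pt set" and a b E2 F2 G2 E1 F1 G1 :: "pt \<Rightarrow> real" and s0 :: real
  assumes open_N: "open N" and open_V2: "open V2"
    and smooth_a: "smooth2_on N a" and smooth_b: "smooth2_on N b"
    and maps_to: "\<And>x. x \<in> N \<Longrightarrow> (a x, b x) \<in> V2"
    and smooth_E2: "smooth2_on V2 E2" and smooth_F2: "smooth2_on V2 F2" and smooth_G2: "smooth2_on V2 G2"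
    and base: "(s0, 0) \<in> N"
    and b_axis: "\<And>x. x \<in> N \<Longrightarrow> snd x = 0 \<Longrightarrow> b x = 0"
    and Dv_a_axis: "\<And>x. x \<in> N \<Longrightarrow> snd x = 0 \<Longrightarrow> Dv a x = 0"
    and F2_G2_axis: "\<And>y. y \<in> V2 \<Longrightarrow> snd y = 0 \<Longrightarrow> F2 y = 0 \<and> G2 y = 0"
    and Dv_E2_base: "Dv E2 (a (s0, 0), b (s0, 0)) = 0"
    and Dv_G2_base: "Dv G2 (a (s0, 0), b (s0, 0)) = 0"
    and E1_eq: "\<And>x. x \<in> N \<Longrightarrow> E1 x = E2 (a x, b x) * (Du a x)\<^sup>2 + 2 * F2 (a x, b x) * Du a x * Du b x
      + G2 (a x, b x) * (Du b x)\<^sup>2"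
    and F1_eq: "\<And>x. x \<in> N \<Longrightarrow> F1 x = E2 (a x, b x) * Du a x * Dv a x
      + F2 (a x, b x) * (Du a x * Dv b x + Dv a x * Du b x) + G2 (a x, b x) * Du b x * Dv b x"
    and G1_eq: "\<And>x. x \<in> N \<Longrightarrow> G1 x = E2 (a x, b x) * (Dv a x)\<^sup>2 + 2 * F2 (a x, b x) * Dv a x * Dv b x
      + G2 (a x, b x) * (Dv b x)\<^sup>2"
begin

definition "q1 = (s0, 0::real)"
definition "q2 = (a (s0, 0), b (s0, 0))"

definition "axis_slice = {s. (s, 0) \<in> N}"
definition "vertical_slice = {t. (s0, t) \<in> N}"

lemma axis_slice_open: "open axis_slice" "s0 \<in> axis_slice"
  using open_hline[OF open_N] base by (auto simp: axis_slice_def)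

lemma vertical_slice_open: "open vertical_slice" "0 \<in> vertical_slice"
  using open_vline[OF open_N] base by (auto simp: vertical_slice_def)

lemma DERIV_vline_comp:
  assumes g: "smooth2_on V2 g" and x: "(s, t) \<in> N"
  shows "((\<lambda>t. g (a (s, t), b (s, t))) has_real_derivative
      Du g (a (s, t), b (s, t)) * Dv a (s, t) + Dv g (a (s, t), b (s, t)) * Dv b (s, t)) (at t)"
  by (rule DERIV_comp_Pair[OF smooth2_differentiable[OF g maps_to[OF x]]
      smooth2_DERIV_Dv[OF smooth_a x] smooth2_DERIV_Dv[OF smooth_b x]])

lemma DERIV_hline_comp:
  assumes g: "smooth2_on V2 g" and x: "(s, t) \<in> N"
  shows "((\<lambda>s. g (a (s, t), b (s, t))) has_real_derivative
      Du g (a (s, t), b (s, t)) * Du a (s, t) + Dv g (a (s, t), b (s, t)) * Du b (s, t)) (at s)"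
  by (rule DERIV_comp_Pair[OF smooth2_differentiable[OF g maps_to[OF x]]
      smooth2_DERIV_Du[OF smooth_a x] smooth2_DERIV_Du[OF smooth_b x]])

lemma Du_b_axis: "x \<in> N \<Longrightarrow> snd x = 0 \<Longrightarrow> Du b x = 0"
  by (rule Du_eq_0_on_axis[OF open_N]) (use b_axis in auto)

lemma vanishing_at_base:
  "Dv a (s0, 0) = 0" "Du b (s0, 0) = 0" "Dv (Du a) (s0, 0) = 0"
  "F2 (a (s0, 0), b (s0, 0)) = 0" "G2 (a (s0, 0), b (s0, 0)) = 0"
  "Du F2 (a (s0, 0), b (s0, 0)) = 0" "Du G2 (a (s0, 0), b (s0, 0)) = 0"
  "Dv E2 (a (s0, 0), b (s0, 0)) = 0" "Dv G2 (a (s0, 0), b (s0, 0)) = 0"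
proof -
  have q2: "(a (s0, 0), b (s0, 0)) \<in> V2" "snd (a (s0, 0), b (s0, 0)) = 0"
    using maps_to[OF base] b_axis[OF base] by auto
  show "Dv a (s0, 0) = 0" "Du b (s0, 0) = 0" using Dv_a_axis[OF base] Du_b_axis[OF base] by auto
  have "Du (Dv a) (s0, 0) = 0" by (rule Du_eq_0_on_axis[OF open_N base]) (use Dv_a_axis in auto)
  thus "Dv (Du a) (s0, 0) = 0" using schwarz[OF open_N smooth_a base] by simp
  show "F2 (a (s0, 0), b (s0, 0)) = 0" "G2 (a (s0, 0), b (s0, 0)) = 0" using F2_G2_axis[OF q2] by auto
  show "Du F2 (a (s0, 0), b (s0, 0)) = 0" "Du G2 (a (s0, 0), b (s0, 0)) = 0"
    by (rule Du_eq_0_on_axis[OF open_V2 q2]; use F2_G2_axis in auto)+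
  show "Dv E2 (a (s0, 0), b (s0, 0)) = 0" "Dv G2 (a (s0, 0), b (s0, 0)) = 0"
    by (fact Dv_E2_base Dv_G2_base)+
qed

lemma E1_axis:
  assumes "s \<in> axis_slice"
  shows "E1 (s, 0) = E2 (a (s, 0), b (s, 0)) * (Du a (s, 0))\<^sup>2"
proof -
  have x: "(s, 0) \<in> N" using assms by (simp add: axis_slice_def)
  hence "F2 (a (s, 0), b (s, 0)) = 0 \<and> G2 (a (s, 0), b (s, 0)) = 0"
    using F2_G2_axis[OF maps_to[OF x]] b_axis[OF x] by simp
  thus ?thesis using E1_eq[OF x] by simp
qed

lemma E1_base: "E1 q1 = E2 q2 * (Du a q1)\<^sup>2"
  using E1_axis[OF axis_slice_open(2)] by (simp add: q1_def q2_def)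

lemma Du_E1_base: "Du E1 q1 = Du E2 q2 * (Du a q1)^3 + 2 * E2 q2 * Du a q1 * Du (Du a) q1"
proof -
  have "((\<lambda>s. E2 (a (s, 0), b (s, 0)) * (Du a (s, 0))\<^sup>2) has_real_derivative
      Du E2 q2 * (Du a q1)^3 + 2 * E2 q2 * Du a q1 * Du (Du a) q1) (at s0)"
    using DERIV_hline_comp[OF smooth_E2 base] smooth2_DERIV_Du[OF smooth2_Du[OF smooth_a] base]
      vanishing_at_base
    by (auto intro!: derivative_eq_intros simp: q1_def q2_def power2_eq_square power3_eq_cube)
  thus ?thesis unfolding q1_def
    by (rule Du_eqI_on[OF _ axis_slice_open]) (simp add: E1_axis)
qed

lemma Dv_F1_axis:
  assumes "s \<in> axis_slice"
  shows "Dv F1 (s, 0) = E2 (a (s, 0), b (s, 0)) * Du a (s, 0) * Dv (Dv a) (s, 0)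
      + Dv F2 (a (s, 0), b (s, 0)) * Du a (s, 0) * (Dv b (s, 0))\<^sup>2"
proof -
  have x: "(s, 0) \<in> N" using assms by (simp add: axis_slice_def)
  have z: "Dv a (s, 0) = 0" "Du b (s, 0) = 0" "F2 (a (s, 0), b (s, 0)) = 0" "G2 (a (s, 0), b (s, 0)) = 0"
    using Dv_a_axis[OF x] Du_b_axis[OF x] F2_G2_axis[OF maps_to[OF x]] b_axis[OF x] by auto
  have "((\<lambda>t. E2 (a (s, t), b (s, t)) * Du a (s, t) * Dv a (s, t)
      + F2 (a (s, t), b (s, t)) * (Du a (s, t) * Dv b (s, t) + Dv a (s, t) * Du b (s, t))
      + G2 (a (s, t), b (s, t)) * Du b (s, t) * Dv b (s, t)) has_real_derivative
      E2 (a (s, 0), b (s, 0)) * Du a (s, 0) * Dv (Dv a) (s, 0)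
      + Dv F2 (a (s, 0), b (s, 0)) * Du a (s, 0) * (Dv b (s, 0))\<^sup>2) (at 0)"
    using DERIV_vline_comp[OF smooth_E2 x] DERIV_vline_comp[OF smooth_F2 x] DERIV_vline_comp[OF smooth_G2 x]
      smooth2_DERIV_Dv[OF smooth2_Du[OF smooth_a] x] smooth2_DERIV_Dv[OF smooth2_Dv[OF smooth_a] x]
      smooth2_DERIV_Dv[OF smooth2_Du[OF smooth_b] x] smooth2_DERIV_Dv[OF smooth2_Dv[OF smooth_b] x]
    by (auto intro!: derivative_eq_intros simp: z power2_eq_square)
  thus ?thesis
    by (rule Dv_eqI_on[OF _ open_vline[OF open_N]]) (use x F1_eq in auto)
qed

lemma Dv_F1_base: "Dv F1 q1 = E2 q2 * Du a q1 * Dv (Dv a) q1 + Dv F2 q2 * Du a q1 * (Dv b q1)\<^sup>2"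
  using Dv_F1_axis[OF axis_slice_open(2)] by (simp add: q1_def q2_def)

lemma Du_Dv_F1_base: "Du (Dv F1) q1 = Du E2 q2 * (Du a q1)\<^sup>2 * Dv (Dv a) q1
    + E2 q2 * (Du (Du a) q1 * Dv (Dv a) q1 + Du a q1 * Du (Dv (Dv a)) q1)
    + Du (Dv F2) q2 * (Du a q1)\<^sup>2 * (Dv b q1)\<^sup>2
    + Dv F2 q2 * (Du (Du a) q1 * (Dv b q1)\<^sup>2 + 2 * Du a q1 * Dv b q1 * Du (Dv b) q1)"
proof -
  have "((\<lambda>s. E2 (a (s, 0), b (s, 0)) * Du a (s, 0) * Dv (Dv a) (s, 0)
      + Dv F2 (a (s, 0), b (s, 0)) * Du a (s, 0) * (Dv b (s, 0))\<^sup>2) has_real_derivative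
      Du E2 q2 * (Du a q1)\<^sup>2 * Dv (Dv a) q1
    + E2 q2 * (Du (Du a) q1 * Dv (Dv a) q1 + Du a q1 * Du (Dv (Dv a)) q1)
    + Du (Dv F2) q2 * (Du a q1)\<^sup>2 * (Dv b q1)\<^sup>2
    + Dv F2 q2 * (Du (Du a) q1 * (Dv b q1)\<^sup>2 + 2 * Du a q1 * Dv b q1 * Du (Dv b) q1)) (at s0)"
    using DERIV_hline_comp[OF smooth_E2 base] DERIV_hline_comp[OF smooth2_Dv[OF smooth_F2] base]
      smooth2_DERIV_Du[OF smooth2_Du[OF smooth_a] base]
      smooth2_DERIV_Du[OF smooth2_Dv[OF smooth2_Dv[OF smooth_a]] base]
      smooth2_DERIV_Du[OF smooth2_Dv[OF smooth_b] base] vanishing_at_base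
    by (auto intro!: derivative_eq_intros simp: q1_def q2_def power2_eq_square algebra_simps)
  thus ?thesis unfolding q1_def
    by (rule Du_eqI_on[OF _ axis_slice_open]) (simp add: Dv_F1_axis)
qed

lemma Dv_Dv_E1_base: "Dv (Dv E1) q1 = (Du a q1)\<^sup>2 * (Du E2 q2 * Dv (Dv a) q1 + Dv (Dv E2) q2 * (Dv b q1)\<^sup>2)
    + 2 * E2 q2 * Du a q1 * Dv (Dv (Du a)) q1 + 4 * Dv F2 q2 * Dv b q1 * Du a q1 * Dv (Du b) q1"
proof -
  define c where "c = (\<lambda>t. (a (s0, t), b (s0, t)))"
  define e where "e = (\<lambda>t. (Du E2 (c t) * Dv a (s0, t) + Dv E2 (c t) * Dv b (s0, t)) * (Du a (s0, t))\<^sup>2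
    + E2 (c t) * (2 * Du a (s0, t) * Dv (Du a) (s0, t))
    + 2 * ((Du F2 (c t) * Dv a (s0, t) + Dv F2 (c t) * Dv b (s0, t)) * Du a (s0, t) * Du b (s0, t)
      + F2 (c t) * Dv (Du a) (s0, t) * Du b (s0, t) + F2 (c t) * Du a (s0, t) * Dv (Du b) (s0, t))
    + (Du G2 (c t) * Dv a (s0, t) + Dv G2 (c t) * Dv b (s0, t)) * (Du b (s0, t))\<^sup>2
    + G2 (c t) * (2 * Du b (s0, t) * Dv (Du b) (s0, t)))"
  have Dv_E1: "e t = Dv E1 (s0, t)" if t: "t \<in> vertical_slice" for t
  proof -
    have x: "(s0, t) \<in> N" using t by (simp add: vertical_slice_def)
    have "((\<lambda>t. E2 (a (s0, t), b (s0, t)) * (Du a (s0, t))\<^sup>2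
        + 2 * F2 (a (s0, t), b (s0, t)) * Du a (s0, t) * Du b (s0, t)
        + G2 (a (s0, t), b (s0, t)) * (Du b (s0, t))\<^sup>2) has_real_derivative e t) (at t)"
      using DERIV_vline_comp[OF smooth_E2 x] DERIV_vline_comp[OF smooth_F2 x] DERIV_vline_comp[OF smooth_G2 x]
        smooth2_DERIV_Dv[OF smooth2_Du[OF smooth_a] x] smooth2_DERIV_Dv[OF smooth2_Du[OF smooth_b] x]
      unfolding e_def c_def by (auto intro!: derivative_eq_intros simp: power2_eq_square algebra_simps)
    hence "Dv E1 (s0, t) = e t"
      by (rule Dv_eqI_on[OF _ vertical_slice_open(1) t]) (use E1_eq in \<open>auto simp: vertical_slice_def\<close>)
    thus ?thesis by simp
  qed
  have "(e has_real_derivative (Du a q1)\<^sup>2 * (Du E2 q2 * Dv (Dv a) q1 + Dv (Dv E2) q2 * (Dv b q1)\<^sup>2)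
      + 2 * E2 q2 * Du a q1 * Dv (Dv (Du a)) q1 + 4 * Dv F2 q2 * Dv b q1 * Du a q1 * Dv (Du b) q1) (at 0)"
    using DERIV_vline_comp[OF smooth_E2 base] DERIV_vline_comp[OF smooth_F2 base]
      DERIV_vline_comp[OF smooth_G2 base] DERIV_vline_comp[OF smooth2_Du[OF smooth_E2] base]
      DERIV_vline_comp[OF smooth2_Du[OF smooth_F2] base] DERIV_vline_comp[OF smooth2_Du[OF smooth_G2] base]
      DERIV_vline_comp[OF smooth2_Dv[OF smooth_E2] base] DERIV_vline_comp[OF smooth2_Dv[OF smooth_F2] base]
      DERIV_vline_comp[OF smooth2_Dv[OF smooth_G2] base]
      smooth2_DERIV_Dv[OF smooth2_Du[OF smooth_a] base] smooth2_DERIV_Dv[OF smooth2_Du[OF smooth_b] base]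
      smooth2_DERIV_Dv[OF smooth2_Dv[OF smooth_a] base] smooth2_DERIV_Dv[OF smooth2_Dv[OF smooth_b] base]
      smooth2_DERIV_Dv[OF smooth2_Dv[OF smooth2_Du[OF smooth_a]] base]
      smooth2_DERIV_Dv[OF smooth2_Dv[OF smooth2_Du[OF smooth_b]] base]
    unfolding e_def c_def
    by (auto intro!: derivative_eq_intros simp: vanishing_at_base q1_def q2_def power2_eq_square algebra_simps)
  thus ?thesis unfolding q1_def by (rule Dv_eqI_on[OF _ vertical_slice_open]) (rule Dv_E1)
qed

lemma Dv_Dv_G1_base: "Dv (Dv G1) q1 = 2 * E2 q2 * (Dv (Dv a) q1)\<^sup>2
    + 4 * Dv F2 q2 * Dv (Dv a) q1 * (Dv b q1)\<^sup>2 + Dv (Dv G2) q2 * (Dv b q1)^4"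
proof -
  define c where "c = (\<lambda>t. (a (s0, t), b (s0, t)))"
  define g where "g = (\<lambda>t. (Du E2 (c t) * Dv a (s0, t) + Dv E2 (c t) * Dv b (s0, t)) * (Dv a (s0, t))\<^sup>2
    + E2 (c t) * (2 * Dv a (s0, t) * Dv (Dv a) (s0, t))
    + 2 * ((Du F2 (c t) * Dv a (s0, t) + Dv F2 (c t) * Dv b (s0, t)) * Dv a (s0, t) * Dv b (s0, t)
      + F2 (c t) * Dv (Dv a) (s0, t) * Dv b (s0, t) + F2 (c t) * Dv a (s0, t) * Dv (Dv b) (s0, t))
    + (Du G2 (c t) * Dv a (s0, t) + Dv G2 (c t) * Dv b (s0, t)) * (Dv b (s0, t))\<^sup>2
    + G2 (c t) * (2 * Dv b (s0, t) * Dv (Dv b) (s0, t)))"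
  have Dv_G1: "g t = Dv G1 (s0, t)" if t: "t \<in> vertical_slice" for t
  proof -
    have x: "(s0, t) \<in> N" using t by (simp add: vertical_slice_def)
    have "((\<lambda>t. E2 (a (s0, t), b (s0, t)) * (Dv a (s0, t))\<^sup>2
        + 2 * F2 (a (s0, t), b (s0, t)) * Dv a (s0, t) * Dv b (s0, t)
        + G2 (a (s0, t), b (s0, t)) * (Dv b (s0, t))\<^sup>2) has_real_derivative g t) (at t)"
      using DERIV_vline_comp[OF smooth_E2 x] DERIV_vline_comp[OF smooth_F2 x] DERIV_vline_comp[OF smooth_G2 x]
        smooth2_DERIV_Dv[OF smooth2_Dv[OF smooth_a] x] smooth2_DERIV_Dv[OF smooth2_Dv[OF smooth_b] x]
      unfolding g_def c_def by (auto intro!: derivative_eq_intros simp: power2_eq_square algebra_simps)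
    hence "Dv G1 (s0, t) = g t"
      by (rule Dv_eqI_on[OF _ vertical_slice_open(1) t]) (use G1_eq in \<open>auto simp: vertical_slice_def\<close>)
    thus ?thesis by simp
  qed
  have "(g has_real_derivative 2 * E2 q2 * (Dv (Dv a) q1)\<^sup>2
      + 4 * Dv F2 q2 * Dv (Dv a) q1 * (Dv b q1)\<^sup>2 + Dv (Dv G2) q2 * (Dv b q1)^4) (at 0)"
    using DERIV_vline_comp[OF smooth_E2 base] DERIV_vline_comp[OF smooth_F2 base]
      DERIV_vline_comp[OF smooth_G2 base] DERIV_vline_comp[OF smooth2_Du[OF smooth_E2] base]
      DERIV_vline_comp[OF smooth2_Du[OF smooth_F2] base] DERIV_vline_comp[OF smooth2_Du[OF smooth_G2] base]
      DERIV_vline_comp[OF smooth2_Dv[OF smooth_E2] base] DERIV_vline_comp[OF smooth2_Dv[OF smooth_F2] base]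
      DERIV_vline_comp[OF smooth2_Dv[OF smooth_G2] base]
      smooth2_DERIV_Dv[OF smooth2_Dv[OF smooth_a] base] smooth2_DERIV_Dv[OF smooth2_Dv[OF smooth_b] base]
      smooth2_DERIV_Dv[OF smooth2_Dv[OF smooth2_Dv[OF smooth_a]] base]
      smooth2_DERIV_Dv[OF smooth2_Dv[OF smooth2_Dv[OF smooth_b]] base]
    unfolding g_def c_def
    by (auto intro!: derivative_eq_intros
        simp: vanishing_at_base q1_def q2_def power2_eq_square power4_eq_xxxx algebra_simps)
  thus ?thesis unfolding q1_def by (rule Dv_eqI_on[OF _ vertical_slice_open]) (rule Dv_G1)
qed

lemma mixed_partials_at_base: "Du (Dv b) q1 = Dv (Du b) q1" "Du (Dv (Dv a)) q1 = Dv (Dv (Du a)) q1"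
proof -
  have q1: "q1 \<in> N" using base by (simp add: q1_def)
  show "Du (Dv b) q1 = Dv (Du b) q1" by (rule schwarz[OF open_N smooth_b q1])
  have "Du (Dv (Dv a)) q1 = Dv (Du (Dv a)) q1" by (rule schwarz[OF open_N smooth2_Dv[OF smooth_a] q1])
  also have "\<dots> = Dv (Dv (Du a)) q1"
    by (rule Dv_cong[OF open_N q1]) (use schwarz[OF open_N smooth_a] in auto)
  finally show "Du (Dv (Dv a)) q1 = Dv (Dv (Du a)) q1" .
qed

lemma kappa_numerator_base:
  "- Dv F1 q1 * Du E1 q1 + 2 * E1 q1 * Du (Dv F1) q1 - E1 q1 * Dv (Dv E1) q1
    = (Du a q1)^4 * (Dv b q1)\<^sup>2 * (- Dv F2 q2 * Du E2 q2 + 2 * E2 q2 * Du (Dv F2) q2 - E2 q2 * Dv (Dv E2) q2)"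
  unfolding Dv_F1_base Du_E1_base E1_base Du_Dv_F1_base Dv_Dv_E1_base mixed_partials_at_base
  by (simp add: power2_eq_square power3_eq_cube power4_eq_xxxx algebra_simps)

lemma lambda_term_base:
  "E1 q1 * Dv (Dv G1) q1 - 2 * (Dv F1 q1)\<^sup>2
    = (Du a q1)\<^sup>2 * (Dv b q1)^4 * (E2 q2 * Dv (Dv G2) q2 - 2 * (Dv F2 q2)\<^sup>2)"
  unfolding Dv_F1_base E1_base Dv_Dv_G1_base
  by (simp add: power2_eq_square power4_eq_xxxx algebra_simps)

end

lemma kappa_quotient_scaling:
  fixes E1 E2 as bt n1 n2 Q1 Q2 l1 l2 :: real
  assumes E2: "E2 > 0" and E1_pos: "E1 > 0" and E1: "E1 = E2 * as\<^sup>2" and n: "n1 = as^4 * bt\<^sup>2 * n2"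
    and Q: "Q1 = as\<^sup>2 * bt^4 * Q2" and l1: "l1 = sqrt (Q1/2)" and l2: "l2 = sqrt (Q2/2)"
    and l1p: "l1 > 0" and l2p: "l2 > 0"
  shows "n1 / (2 * E1 powr (3/2) * l1) = n2 / (2 * E2 powr (3/2) * l2)"
proof -
  have as: "as \<noteq> 0" using E1_pos E1 by auto
  have "l1 = sqrt (as\<^sup>2 * (bt\<^sup>2)\<^sup>2 * (Q2/2))" using l1 Q by (simp add: power2_eq_square power4_eq_xxxx algebra_simps)
  also have "\<dots> = sqrt (as\<^sup>2) * sqrt ((bt\<^sup>2)\<^sup>2) * sqrt (Q2/2)" by (simp only: real_sqrt_mult)
  also have "\<dots> = \<bar>as\<bar> * bt\<^sup>2 * l2" by (simp only: real_sqrt_abs l2) simp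
  finally have l1e: "l1 = \<bar>as\<bar> * bt\<^sup>2 * l2" .
  have bt: "bt \<noteq> 0" using l1p l1e by auto
  have pa: "\<bar>as\<bar> > 0" using as by simp
  have pw: "(as\<^sup>2) powr (3/2) = \<bar>as\<bar> ^ 3"
  proof -
    have e1: "as\<^sup>2 = \<bar>as\<bar> powr 2" using powr_realpow[OF pa, of 2] by simp
    have c1: "(\<bar>as\<bar> powr 2) powr (3/2) = \<bar>as\<bar> powr (2 * (3/2))" by (rule powr_powr)
    have h: "(2::real) * (3/2) = real 3" by simp
    have c2: "\<bar>as\<bar> powr (2 * (3/2)) = \<bar>as\<bar> ^ 3" unfolding h by (rule powr_realpow[OF pa])
    show ?thesis by (subst e1, subst c1, rule c2)
  qed
  have Ep: "E1 powr (3/2) = E2 powr (3/2) * \<bar>as\<bar> ^ 3" using E1 E2 pw by (simp add: powr_mult)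
  have a4: "\<bar>as\<bar> ^ 3 * \<bar>as\<bar> = as ^ 4"
  proof -
    have "\<bar>as\<bar> ^ 3 * \<bar>as\<bar> = \<bar>as\<bar> ^ 4" by (simp add: power4_eq_xxxx power3_eq_cube algebra_simps)
    also have "\<dots> = as ^ 4" by (simp add: power_even_abs_numeral)
    finally show ?thesis .
  qed
  have "n1 / (2 * E1 powr (3/2) * l1) = (as^4 * bt\<^sup>2 * n2) / ((as^4 * bt\<^sup>2) * (2 * E2 powr (3/2) * l2))"
  proof -
    have "2 * E1 powr (3/2) * l1 = (\<bar>as\<bar> ^ 3 * \<bar>as\<bar>) * bt\<^sup>2 * (2 * E2 powr (3/2) * l2)"
      unfolding Ep l1e by (simp add: algebra_simps)
    also have "\<dots> = (as^4 * bt\<^sup>2) * (2 * E2 powr (3/2) * l2)" unfolding a4 ..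
    finally have d: "2 * E1 powr (3/2) * l1 = (as^4 * bt\<^sup>2) * (2 * E2 powr (3/2) * l2)" .
    show ?thesis unfolding n d ..
  qed
  also have "\<dots> = n2 / (2 * E2 powr (3/2) * l2)" using as bt by simp
  finally show ?thesis .
qed

text \<open>Only the second chart needs admissibility, for \<open>E\<^sub>v = 0\<close> on its axis.\<close>

locale strongly_adapted_chart_pair =
  c1: strongly_adapted_chart U E0 F0 G0 V1 phi1 lam1 +
  c2: admissible_strongly_adapted_chart U E0 F0 G0 V2 phi2 lam2
  for U E0 F0 G0 V1 phi1 lam1 V2 phi2 lam2 +
  fixes u1 u2 :: real
  assumes base1: "(u1, 0) \<in> V1" and base2: "(u2, 0) \<in> V2"
    and same_point: "phi1 (u1, 0) = phi2 (u2, 0)"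
begin

definition "inv2 = (SOME psi. (\<forall>x\<in>V2. psi (phi2 x) = x) \<and> smoothV_on (phi2 ` V2) psi)"

lemma inv2: "\<And>x. x \<in> V2 \<Longrightarrow> inv2 (phi2 x) = x" and smooth_inv2: "smoothV_on (phi2 ` V2) inv2"
proof -
  have "\<exists>psi. (\<forall>x\<in>V2. psi (phi2 x) = x) \<and> smoothV_on (phi2 ` V2) psi"
    using c2.chart unfolding coord_system_def by blast
  from someI_ex[OF this] show "\<And>x. x \<in> V2 \<Longrightarrow> inv2 (phi2 x) = x" "smoothV_on (phi2 ` V2) inv2"
    unfolding inv2_def by blast+
qed

definition "N = V1 \<inter> phi1 -` (phi2 ` V2)"
definition "a x = fst (inv2 (phi1 x))"
definition "b x = snd (inv2 (phi1 x))"

lemma open_N: "open N"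
  unfolding N_def using c2.chart
  by (intro continuous_open_preimage[OF continuous_on_smoothV[OF c1.smooth_phi] c1.open_V])
    (auto simp: coord_system_def)

lemma N_subset: "N \<subseteq> V1"
  unfolding N_def by blast

lemma transition: "x \<in> N \<Longrightarrow> (a x, b x) \<in> V2 \<and> phi2 (a x, b x) = phi1 x"
  unfolding N_def a_def b_def using inv2 by auto

lemma smooth_a: "smooth2_on N a" and smooth_b: "smooth2_on N b"
proof -
  have "open (phi2 ` V2)" using c2.chart unfolding coord_system_def by blast
  moreover have "phi1 ` N \<subseteq> phi2 ` V2" unfolding N_def by blast
  moreover have "smoothV_on N phi1" using smoothV_subset[OF c1.smooth_phi N_subset] .
  ultimately show "smooth2_on N a" "smooth2_on N b" unfolding a_def b_def
    using smooth_inv2 smooth2_comp_smoothV[OF open_N] unfolding smoothV_on_def by blast+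
qed

lemma base_in_N: "(u1, 0) \<in> N"
  unfolding N_def using base1 base2 same_point by auto

lemma transition_base: "(a (u1, 0), b (u1, 0)) = (u2, 0)"
  using transition[OF base_in_N] base2 same_point c2.chart
  unfolding coord_system_def inj_on_def by metis

lemma b_axis: "x \<in> N \<Longrightarrow> snd x = 0 \<Longrightarrow> b x = 0"
  using c1.singular_iff[of x] c2.singular_iff[of "(a x, b x)"] transition[of x] N_subset by auto

lemma frame_transition:
  assumes x: "x \<in> N"
  shows "DuV phi1 x = Du a x *\<^sub>R DuV phi2 (a x, b x) + Du b x *\<^sub>R DvV phi2 (a x, b x)"
    and "DvV phi1 x = Dv a x *\<^sub>R DuV phi2 (a x, b x) + Dv b x *\<^sub>R DvV phi2 (a x, b x)"
proof -
  have ab: "a differentiable (at x)" "b differentiable (at x)"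
    using smooth2_differentiable[OF smooth_a x] smooth2_differentiable[OF smooth_b x] by auto
  have phi2: "(\<lambda>z. fst (phi2 z)) differentiable (at (a x, b x))"
      "(\<lambda>z. snd (phi2 z)) differentiable (at (a x, b x))"
    using c2.smooth_phi transition[OF x] unfolding smoothV_on_def by (auto intro: smooth2_differentiable)
  have e: "\<And>y. y \<in> N \<Longrightarrow> fst (phi1 y) = fst (phi2 (a y, b y))"
      "\<And>y. y \<in> N \<Longrightarrow> snd (phi1 y) = snd (phi2 (a y, b y))"
    using transition by auto
  have "Du (\<lambda>y. fst (phi1 y)) x = Du (\<lambda>z. fst (phi2 z)) (a x, b x) * Du a x + Dv (\<lambda>z. fst (phi2 z)) (a x, b x) * Du b x"
    "Du (\<lambda>y. snd (phi1 y)) x = Du (\<lambda>z. snd (phi2 z)) (a x, b x) * Du a x + Dv (\<lambda>z. snd (phi2 z)) (a x, b x) * Du b x"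
    "Dv (\<lambda>y. fst (phi1 y)) x = Du (\<lambda>z. fst (phi2 z)) (a x, b x) * Dv a x + Dv (\<lambda>z. fst (phi2 z)) (a x, b x) * Dv b x"
    "Dv (\<lambda>y. snd (phi1 y)) x = Du (\<lambda>z. snd (phi2 z)) (a x, b x) * Dv a x + Dv (\<lambda>z. snd (phi2 z)) (a x, b x) * Dv b x"
    using Du_cong[OF open_N x e(1)] Du_cong[OF open_N x e(2)] Dv_cong[OF open_N x e(1)] Dv_cong[OF open_N x e(2)]
      Du_comp[OF phi2(1) ab] Du_comp[OF phi2(2) ab] Dv_comp[OF phi2(1) ab] Dv_comp[OF phi2(2) ab]
    by simp_all
  thus "DuV phi1 x = Du a x *\<^sub>R DuV phi2 (a x, b x) + Du b x *\<^sub>R DvV phi2 (a x, b x)"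
    "DvV phi1 x = Dv a x *\<^sub>R DuV phi2 (a x, b x) + Dv b x *\<^sub>R DvV phi2 (a x, b x)"
    unfolding DuV_def DvV_def by (simp_all add: algebra_simps)
qed

abbreviation "E1 \<equiv> cE E0 F0 G0 phi1"
abbreviation "F1 \<equiv> cF E0 F0 G0 phi1"
abbreviation "G1 \<equiv> cG E0 F0 G0 phi1"
abbreviation "E2 \<equiv> cE E0 F0 G0 phi2"
abbreviation "F2 \<equiv> cF E0 F0 G0 phi2"
abbreviation "G2 \<equiv> cG E0 F0 G0 phi2"

lemma coefficient_transition:
  assumes x: "x \<in> N"
  shows "E1 x = E2 (a x, b x) * (Du a x)\<^sup>2 + 2 * F2 (a x, b x) * Du a x * Du b x + G2 (a x, b x) * (Du b x)\<^sup>2"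
    and "F1 x = E2 (a x, b x) * Du a x * Dv a x + F2 (a x, b x) * (Du a x * Dv b x + Dv a x * Du b x)
      + G2 (a x, b x) * Du b x * Dv b x"
    and "G1 x = E2 (a x, b x) * (Dv a x)\<^sup>2 + 2 * F2 (a x, b x) * Dv a x * Dv b x + G2 (a x, b x) * (Dv b x)\<^sup>2"
proof -
  have F2: "ip E0 F0 G0 (phi2 z) (DvV phi2 z) (DuV phi2 z) = F2 z" for z
    unfolding cF_def using ip_sym by metis
  note ip = ip_scaleR_add_both frame_transition[OF x] transition[OF x, THEN conjunct2, symmetric]
    F2 cE_def[of E0 F0 G0 phi2] cF_def[of E0 F0 G0 phi2] cG_def[of E0 F0 G0 phi2]
  show "E1 x = E2 (a x, b x) * (Du a x)\<^sup>2 + 2 * F2 (a x, b x) * Du a x * Du b x + G2 (a x, b x) * (Du b x)\<^sup>2"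
    unfolding cE_def[of E0 F0 G0 phi1] by (simp add: ip power2_eq_square algebra_simps)
  show "F1 x = E2 (a x, b x) * Du a x * Dv a x + F2 (a x, b x) * (Du a x * Dv b x + Dv a x * Du b x)
      + G2 (a x, b x) * Du b x * Dv b x"
    unfolding cF_def[of E0 F0 G0 phi1] by (simp add: ip algebra_simps)
  show "G1 x = E2 (a x, b x) * (Dv a x)\<^sup>2 + 2 * F2 (a x, b x) * Dv a x * Dv b x + G2 (a x, b x) * (Dv b x)\<^sup>2"
    unfolding cG_def[of E0 F0 G0 phi1] by (simp add: ip power2_eq_square algebra_simps)
qed

text \<open>On the axis both \<open>\<partial>\<^sub>v\<close> are null while \<open>E2 > 0\<close>, so the transition has no
  \<open>\<partial>\<^sub>u\<close> component in the \<open>v\<close>-direction.\<close>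

lemma Dv_a_axis:
  assumes x: "x \<in> N" "snd x = 0"
  shows "Dv a x = 0"
proof -
  have ax: "(a x, b x) \<in> V2" "snd (a x, b x) = 0" using transition[OF x(1)] b_axis[OF x] by auto
  have "DvV phi1 x \<in> null_space E0 F0 G0 (phi1 x)" using c1.null_Dv[of x] x N_subset by auto
  hence "ip E0 F0 G0 (phi1 x) (DvV phi1 x) (DuV phi2 (a x, b x)) = 0"
    unfolding null_space_def by blast
  moreover have "DvV phi2 (a x, b x) \<in> null_space E0 F0 G0 (phi1 x)"
    using c2.null_Dv[OF ax] transition[OF x(1)] by auto
  hence "ip E0 F0 G0 (phi1 x) (DvV phi2 (a x, b x)) (DuV phi2 (a x, b x)) = 0"
    unfolding null_space_def by blast
  ultimately have "Dv a x * E2 (a x, b x) = 0"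
    using frame_transition(2)[OF x(1)] transition[OF x(1)] ip_scaleR_add_left unfolding cE_def by simp
  thus ?thesis using c2.E_pos_axis[OF ax] by simp
qed

sublocale axis_transition N V2 a b E2 F2 G2 E1 F1 G1 u1
proof
  show "open N" "open V2" "smooth2_on N a" "smooth2_on N b" "(u1, 0) \<in> N"
    by (fact open_N c2.open_V smooth_a smooth_b base_in_N)+
  show "smooth2_on V2 E2" "smooth2_on V2 F2" "smooth2_on V2 G2"
    by (fact c2.smooth_E c2.smooth_F c2.smooth_G)+
  show "Dv E2 (a (u1, 0), b (u1, 0)) = 0" "Dv G2 (a (u1, 0), b (u1, 0)) = 0"
    unfolding transition_base using base2 by (auto intro: c2.Dv_E_axis c2.Dv_G_axis)
qed (use transition b_axis Dv_a_axis c2.F_G_axis coefficient_transition in auto)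

lemma kappa_s_eq: "kappa_s E0 F0 G0 phi1 lam1 u1 = kappa_s E0 F0 G0 phi2 lam2 u2"
proof -
  have q: "q1 = (u1, 0)" "q2 = (u2, 0)" using transition_base by (simp_all add: q1_def q2_def)
  show ?thesis
    unfolding kappa_s_def Let_def
  proof (rule kappa_quotient_scaling)
    show "E2 (u2, 0) > 0" "E1 (u1, 0) > 0"
      using base1 base2 by (auto intro: c1.E_pos_axis c2.E_pos_axis)
    show "E1 (u1, 0) = E2 (u2, 0) * (Du a (u1, 0))\<^sup>2"
      using E1_base unfolding q .
    show "- Dv F1 (u1, 0) * Du E1 (u1, 0) + 2 * E1 (u1, 0) * Du (Dv F1) (u1, 0) - E1 (u1, 0) * Dv (Dv E1) (u1, 0)
       = (Du a (u1, 0))^4 * (Dv b (u1, 0))\<^sup>2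
         * (- Dv F2 (u2, 0) * Du E2 (u2, 0) + 2 * E2 (u2, 0) * Du (Dv F2) (u2, 0) - E2 (u2, 0) * Dv (Dv E2) (u2, 0))"
      using kappa_numerator_base unfolding q .
    show "E1 (u1, 0) * Dv (Dv G1) (u1, 0) - 2 * (Dv F1 (u1, 0))\<^sup>2
       = (Du a (u1, 0))\<^sup>2 * (Dv b (u1, 0))^4 * (E2 (u2, 0) * Dv (Dv G2) (u2, 0) - 2 * (Dv F2 (u2, 0))\<^sup>2)"
      using lambda_term_base unfolding q .
  qed (use base1 base2 in \<open>auto intro: c1.Dv_lam_axis c2.Dv_lam_axis c1.Dv_lam_pos c2.Dv_lam_pos\<close>)
qed

end

text \<open>The \<open>A\<^sub>2\<close> hypothesis only guarantees that strongly adapted charts exist; the computation does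
  not use it.\<close>

theorem proposition2p23:
  fixes U V1 V2 :: "(real \<times> real) set"
    and E0 F0 G0 lam1 lam2 :: "real \<times> real \<Rightarrow> real"
    and phi1 phi2 :: "real \<times> real \<Rightarrow> real \<times> real"
    and p :: "real \<times> real" and u1 u2 :: real
  assumes "kossowski_metric U E0 F0 G0"
    and "A2_point U E0 F0 G0 p"
    and "strongly_adapted U E0 F0 G0 p V1 phi1"
    and "strongly_adapted U E0 F0 G0 p V2 phi2"
    and "good_lambda E0 F0 G0 V1 phi1 lam1"
    and "good_lambda E0 F0 G0 V2 phi2 lam2"
    and "(u1, 0) \<in> V1" and "phi1 (u1, 0) = p"
    and "(u2, 0) \<in> V2" and "phi2 (u2, 0) = p"
  shows "kappa_s E0 F0 G0 phi1 lam1 u1 = kappa_s E0 F0 G0 phi2 lam2 u2"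
proof -
  have admissible: "admissible U E0 F0 G0"
    using assms(1) unfolding kossowski_metric_def by blast
  hence "psd_metric U E0 F0 G0"
    unfolding admissible_def by blast
  then interpret strongly_adapted_chart_pair U E0 F0 G0 V1 phi1 lam1 V2 phi2 lam2 u1 u2
    using admissible assms(3-10) unfolding strongly_adapted_def by unfold_locales auto
  show ?thesis by (rule kappa_s_eq)
qed

end
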